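(* Fix $k\in\mathbb{Z}_{\geq0}$. For $1\leq r\leq k$, in $\mathcal{A}_k$ we have $$p_r=\sum_{i=0}^{r-1}(-1)^i\,\underline{V^r_{i,wc}}+\sum_{i=1}^{r-1}(-1)^i(r-i)\,\underline{U^r_{i-1,wc}}+\sum_{i=1}^{r-2}(-1)^i\,\underline{U^r_{i-1,\overline{wc},\mathrm{left}}}.$$
   Context: Indices are elements of $\mathbb{Z}/(k+1)\mathbb{Z}$, identified with $[0,k]$. $\mathcal{A}_k$ is the associative $\mathbb{Z}$-algebra with generators $A_0,\dots,A_k$ subject only to $A_iA_{i+1}A_i=A_{i+1}A_iA_{i+1}$ for all $i$ and $A_iA_j=A_jA_i$ whenever $i-j\not\equiv\pm1\pmod{k+1}$. A word $A_{i_1\dots i_m}$ is a sequence of indices with value $A_{i_1}\cdots A_{i_m}$, weak length $m$ and support $\{i_1,\dots,i_m\}$. For a proper subset $A\subsetneq[0,k]$ with $|A|=s$, $d_A=A_{i_1\dots i_s}$ and $i_A=A_{i_s\dots i_1}$, where $(i_1,\dots,i_s)$ is any ordering of $A$ such that whenever $i,i+1\in A$, $i+1$ occurs before $i$ ($d_\emptyset=i_\emptyset=1$). Define $h_s=\sum_{A\in\binom{[0,k]}{s}}d_A$, $e_s=\sum_{A\in\binom{[0,k]}{s}}i_A$, $s_{(r-i,1^i)}=\sum_{j=0}^i(-1)^jh_{r-i+j}e_{i-j}$, and $p_r=\sum_{i=0}^{r-1}(-1)^is_{(r-i,1^i)}$. For a proper subset $S$, with $a$ the smallest element of $[0,k]$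 not in $S$, $I_S$ is the total order $a+1<\dots<k<0<\dots<a-1$. A word $u=A_{i_1\dots i_m}$ with proper support is a weak hook word of hook type $V$ (resp. $U$) if with respect to $I_{supp(u)}$, for some $j$, $i_1>\dots>i_j<i_{j+1}<\dots<i_m$ with left side $i_1,\dots,i_j$ and right side $i_j,\dots,i_m$ (resp. $i_1>\dots>i_j=i_{j+1}<\dots<i_m$ with left side $i_1,\dots,i_j$ and right side $i_{j+1},\dots,i_m$). $asc(u)$ is the number of $t$ with $i_t<i_{t+1}$. $u$ is $k$-connected if $supp(u)$ is an interval of $I_{supp(u)}$. Otherwise, among pairs of letters $a<c$ of $u$ with $a\not\equiv c-1\pmod{k+1}$ and no letter $b$ of $u$ with $a<b<c$, let $u_{min}$ be the smallest such $c$; it occurs once or twice (if twice, once on each side). $u$ is $k$-weak connected if it is $k$-connected or $u_{min}$ occurs twice. For $X\in\{U,V\}$, $X^r_{i,wc}$ is the set of $k$-weak connected weak hook words of type $X$, length $r$, $asc=i$; $X^r_{i,\overline{wc},\mathrm{left}}$ is the set of such words (type $X$, length $r$, $asc=i$) that are not $k$-weak connected and whose single occurrence of $u_{min}$ lies on the left side. For a finite set $S$ of words, $\underline{S}=\sum_{u\in S}u\in\mathcal{A}_k$. *)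

theory Defs
  imports Main "HOL-Library.Function_Algebras"
begin

text \<open>Elements of the free associative Z-algebra are finitely supported functions
  from words (lists of indices) to integer coefficients; addition is pointwise
  (Function_Algebras); multiplication is concatenation product (amul).\<close>

type_synonym falg = "nat list \<Rightarrow> int"

definition wd :: "nat list \<Rightarrow> falg" where
  "wd w = (\<lambda>x. if x = w then 1 else 0)"

definition amul :: "falg \<Rightarrow> falg \<Rightarrow> falg" where
  "amul f g = (\<lambda>w. \<Sum>n\<le>length w. f (take n w) * g (drop n w))"

definition smul :: "int \<Rightarrow> falg \<Rightarrow> falg" where
  "smul c f = (\<lambda>w. c * f w)"

text \<open>Successor of an index in Z/(k+1)Z, identified with [0,k].\<close>
definition isuc :: "nat \<Rightarrow> nat \<Rightarrow> nat" where
  "isuc k i = (i + 1) mod (k + 1)"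

text \<open>Defining relations of A_k, as pairs of words (p,q) meaning p = q.\<close>
definition rels :: "nat \<Rightarrow> (nat list \<times> nat list) set" where
  "rels k =
     {([i, isuc k i, i], [isuc k i, i, isuc k i]) | i. i \<le> k}
   \<union> {([i, j], [j, i]) | i j. i \<le> k \<and> j \<le> k \<and> isuc k i \<noteq> j \<and> isuc k j \<noteq> i}"

inductive_set rel_ideal :: "nat \<Rightarrow> falg set" for k where
  zero: "0 \<in> rel_ideal k"
| add: "x \<in> rel_ideal k \<Longrightarrow> y \<in> rel_ideal k \<Longrightarrow> x + y \<in> rel_ideal k"
| neg: "x \<in> rel_ideal k \<Longrightarrow> - x \<in> rel_ideal k"
| gen: "(p, q) \<in> rels k \<Longrightarrow> set a \<subseteq> {0..k} \<Longrightarrow> set b \<subseteq> {0..k} \<Longrightarrow>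
        wd (a @ p @ b) - wd (a @ q @ b) \<in> rel_ideal k"

definition aeq :: "nat \<Rightarrow> falg \<Rightarrow> falg \<Rightarrow> bool" where
  "aeq k f g \<longleftrightarrow> f - g \<in> rel_ideal k"

definition valid_order :: "nat \<Rightarrow> nat set \<Rightarrow> nat list \<Rightarrow> bool" where
  "valid_order k A w \<longleftrightarrow> distinct w \<and> set w = A \<and>
     (\<forall>x y. x < length w \<and> y < length w \<and> w ! y = isuc k (w ! x) \<longrightarrow> y < x)"

definition dword :: "nat \<Rightarrow> nat set \<Rightarrow> nat list" where
  "dword k A = (SOME w. valid_order k A w)"

definition d_el :: "nat \<Rightarrow> nat set \<Rightarrow> falg" where
  "d_el k A = wd (dword k A)"

definition i_el :: "nat \<Rightarrow> nat set \<Rightarrow> falg" where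
  "i_el k A = wd (rev (dword k A))"

definition h_el :: "nat \<Rightarrow> nat \<Rightarrow> falg" where
  "h_el k s = (\<Sum>A\<in>{A. A \<subseteq> {0..k} \<and> card A = s}. d_el k A)"

definition e_el :: "nat \<Rightarrow> nat \<Rightarrow> falg" where
  "e_el k s = (\<Sum>A\<in>{A. A \<subseteq> {0..k} \<and> card A = s}. i_el k A)"

definition hook_s :: "nat \<Rightarrow> nat \<Rightarrow> nat \<Rightarrow> falg" where
  "hook_s k r i = (\<Sum>j\<le>i. smul ((-1) ^ j) (amul (h_el k (r - i + j)) (e_el k (i - j))))"

definition p_el :: "nat \<Rightarrow> nat \<Rightarrow> falg" where
  "p_el k r = (\<Sum>i<r. smul ((-1) ^ i) (hook_s k r i))"

text \<open>a = smallest element of [0,k] not in S; the total order I_S is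
  a+1 < ... < k < 0 < ... < a-1, encoded via the rank (x - a - 1) mod (k+1).\<close>
definition amiss :: "nat \<Rightarrow> nat set \<Rightarrow> nat" where
  "amiss k S = (LEAST a. a \<le> k \<and> a \<notin> S)"

definition irank :: "nat \<Rightarrow> nat set \<Rightarrow> nat \<Rightarrow> nat" where
  "irank k S x = (x + k - amiss k S) mod (k + 1)"

definition ilt :: "nat \<Rightarrow> nat set \<Rightarrow> nat \<Rightarrow> nat \<Rightarrow> bool" where
  "ilt k S x y \<longleftrightarrow> irank k S x < irank k S y"

definition is_word :: "nat \<Rightarrow> nat list \<Rightarrow> bool" where
  "is_word k u \<longleftrightarrow> set u \<subseteq> {0..k} \<and> set u \<noteq> {0..k}"

text \<open>Hook type V with j letters on the left side (left: positions < j,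
  right: positions \<ge> j-1; 0-based).\<close>
definition hookV_at :: "nat \<Rightarrow> nat list \<Rightarrow> nat \<Rightarrow> bool" where
  "hookV_at k u j \<longleftrightarrow> 1 \<le> j \<and> j \<le> length u \<and>
     (\<forall>t. t + 1 < j \<longrightarrow> ilt k (set u) (u ! (t + 1)) (u ! t)) \<and>
     (\<forall>t. j - 1 \<le> t \<and> t + 1 < length u \<longrightarrow> ilt k (set u) (u ! t) (u ! (t + 1)))"

text \<open>Hook type U with j letters on the left side (left: positions < j,
  right: positions \<ge> j; 0-based).\<close>
definition hookU_at :: "nat \<Rightarrow> nat list \<Rightarrow> nat \<Rightarrow> bool" where
  "hookU_at k u j \<longleftrightarrow> 1 \<le> j \<and> j < length u \<and>
     (\<forall>t. t + 1 < j \<longrightarrow> ilt k (set u) (u ! (t + 1)) (u ! t)) \<and>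
     u ! (j - 1) = u ! j \<and>
     (\<forall>t. j \<le> t \<and> t + 1 < length u \<longrightarrow> ilt k (set u) (u ! t) (u ! (t + 1)))"

definition asc :: "nat \<Rightarrow> nat list \<Rightarrow> nat" where
  "asc k u = card {t. t + 1 < length u \<and> ilt k (set u) (u ! t) (u ! (t + 1))}"

definition k_connected :: "nat \<Rightarrow> nat list \<Rightarrow> bool" where
  "k_connected k u \<longleftrightarrow>
     (\<forall>x\<in>set u. \<forall>z\<in>set u. \<forall>y. y \<le> k \<and> y \<noteq> amiss k (set u) \<and>
        ilt k (set u) x y \<and> ilt k (set u) y z \<longrightarrow> y \<in> set u)"

definition gap_letters :: "nat \<Rightarrow> nat list \<Rightarrow> nat set" where
  "gap_letters k u = {c \<in> set u. \<exists>a\<in>set u. ilt k (set u) a c \<and> isuc k a \<noteq> c \<and>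
        \<not> (\<exists>b\<in>set u. ilt k (set u) a b \<and> ilt k (set u) b c)}"

definition is_umin :: "nat \<Rightarrow> nat list \<Rightarrow> nat \<Rightarrow> bool" where
  "is_umin k u c \<longleftrightarrow> c \<in> gap_letters k u \<and> (\<forall>c'\<in>gap_letters k u. \<not> ilt k (set u) c' c)"

definition weak_connected :: "nat \<Rightarrow> nat list \<Rightarrow> bool" where
  "weak_connected k u \<longleftrightarrow> k_connected k u \<or> (\<exists>c. is_umin k u c \<and> count_list u c = 2)"

definition V_wc :: "nat \<Rightarrow> nat \<Rightarrow> nat \<Rightarrow> nat list set" where
  "V_wc k r i = {u. is_word k u \<and> length u = r \<and> (\<exists>j. hookV_at k u j) \<and>
                    asc k u = i \<and> weak_connected k u}"

definition U_wc :: "nat \<Rightarrow> nat \<Rightarrow> nat \<Rightarrow> nat list set" where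
  "U_wc k r i = {u. is_word k u \<and> length u = r \<and> (\<exists>j. hookU_at k u j) \<and>
                    asc k u = i \<and> weak_connected k u}"

definition U_nwc_left :: "nat \<Rightarrow> nat \<Rightarrow> nat \<Rightarrow> nat list set" where
  "U_nwc_left k r i = {u. is_word k u \<and> length u = r \<and> asc k u = i \<and>
      \<not> weak_connected k u \<and>
      (\<exists>j c p. hookU_at k u j \<and> is_umin k u c \<and> p < j \<and> u ! p = c)}"

definition usum :: "nat list set \<Rightarrow> falg" where
  "usum S = (\<Sum>u\<in>S. wd u)"

end

(*
  Writing h_a e_(r-a) as a sum of products d_A i_B and commuting letters that are not neighbours
  modulo k+1, each product straightens to the unique word w of length r whose first a letters
  decrease and whose remaining letters increase in the order I_(set w); call such a cut point a
  a valley of w.  The alternating sum defining p_r then collapses to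
  sum over w of c(w) w with c(w) = sum over the valleys a of w of (-1)^(r-a) a.

  A word has no valley, two adjacent valleys j-1, j (hook type V, asc = r-j), or a single valley j
  (hook type U with a repeated letter at the bottom, asc = r-j-1).  This already gives the
  coefficients of the right-hand side on weak connected words and on words without valleys.
  On the remaining words u_min occurs exactly once and commutes with every smaller letter.
  Moving it across the adjacent block of smaller letters is an involution that preserves the class
  in A_k, exchanges left and right occurrences of u_min, and lowers every valley by one when u_min
  starts on the left.  Hence the difference of the two sides changes sign under the involution,
  and so lies in the defining ideal.
*)

theory Submission
  imports Defs
begin

lemma rel_ideal_sum: "(\<And>a. a \<in> A \<Longrightarrow> f a \<in> rel_ideal k) \<Longrightarrow> sum f A \<in> rel_ideal k"
  by (induction A rule: infinite_finite_induct) (auto intro: rel_ideal.zero rel_ideal.add)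

lemma rel_ideal_smul:
  assumes "x \<in> rel_ideal k"
  shows "smul c x \<in> rel_ideal k"
proof -
  have nat_mult: "smul (int n) x \<in> rel_ideal k" for n
  proof (induction n)
    case 0
    then show ?case using rel_ideal.zero by (simp add: smul_def zero_fun_def)
  next
    case (Suc n)
    have "smul (int (Suc n)) x = smul (int n) x + x"
      by (simp add: smul_def fun_eq_iff algebra_simps)
    then show ?case using Suc assms rel_ideal.add by metis
  qed
  show ?thesis
  proof (cases "c \<ge> 0")
    case True
    then show ?thesis using nat_mult[of "nat c"] by simp
  next
    case False
    then have "smul c x = - smul (int (nat (- c))) x" by (simp add: smul_def fun_eq_iff)
    then show ?thesis using rel_ideal.neg[OF nat_mult] by metis
  qed
qed

lemma smul_diff: "smul c (x - y) = smul c x - smul c y"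
  by (simp add: smul_def fun_eq_iff algebra_simps)

lemma sum_fun_apply: "(sum f A) w = (\<Sum>a\<in>A. f a w)" for f :: "'a \<Rightarrow> 'b \<Rightarrow> 'c::comm_monoid_add"
  by (induction A rule: infinite_finite_induct) auto

lemma amul_wd: "amul (wd u) (wd v) = wd (u @ v)"
proof
  fix w
  have "(take n w = u \<and> drop n w = v) \<longleftrightarrow> n = length u \<and> w = u @ v" if "n \<le> length w" for n
    using that by (metis append_eq_conv_conj append_take_drop_id length_take min.absorb2)
  then have "amul (wd u) (wd v) w = (\<Sum>n\<le>length w. if n = length u \<and> w = u @ v then 1 else 0)"
    unfolding amul_def wd_def by (intro sum.cong) auto
  also have "\<dots> = wd (u @ v) w"
    by (simp add: wd_def)
  finally show "amul (wd u) (wd v) w = wd (u @ v) w" .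
qed

lemma amul_sum_left: "amul (sum f A) g = (\<Sum>a\<in>A. amul (f a) g)"
  unfolding amul_def fun_eq_iff sum_fun_apply sum_distrib_right by (simp add: sum.swap[of _ A])

lemma amul_sum_right: "amul g (sum f A) = (\<Sum>a\<in>A. amul g (f a))"
  unfolding amul_def fun_eq_iff sum_fun_apply sum_distrib_left by (simp add: sum.swap[of _ A])

definition rewrite_step :: "nat \<Rightarrow> nat list \<Rightarrow> nat list \<Rightarrow> bool" where
  "rewrite_step k u v \<longleftrightarrow> (\<exists>a p q b. (p, q) \<in> rels k \<and> set a \<subseteq> {0..k} \<and> set b \<subseteq> {0..k} \<and>
     u = a @ p @ b \<and> v = a @ q @ b)"

abbreviation word_equiv :: "nat \<Rightarrow> nat list \<Rightarrow> nat list \<Rightarrow> bool" where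
  "word_equiv k \<equiv> equivclp (rewrite_step k)"

lemma rewrite_step_imp_rel_ideal:
  assumes "rewrite_step k u v"
  shows "wd u - wd v \<in> rel_ideal k"
  using assms rel_ideal.gen unfolding rewrite_step_def by blast

lemma word_equiv_imp_rel_ideal:
  assumes "word_equiv k u v"
  shows "wd u - wd v \<in> rel_ideal k"
  using assms
proof (induction rule: equivclp_induct)
  case base
  show ?case using rel_ideal.zero by (simp only: diff_self)
next
  case (step v w)
  have "wd v - wd w \<in> rel_ideal k"
    using step(2) rewrite_step_imp_rel_ideal[of k v w] rewrite_step_imp_rel_ideal[of k w v]
      rel_ideal.neg[of "wd w - wd v" k] by auto
  then have "(wd u - wd v) + (wd v - wd w) \<in> rel_ideal k"
    using rel_ideal.add[OF step(3)] by blast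
  then show ?case by (simp only: add_diff_eq diff_add_cancel)
qed

lemma word_equiv_context:
  assumes "word_equiv k u v" "set x \<subseteq> {0..k}" "set y \<subseteq> {0..k}"
  shows "word_equiv k (x @ u @ y) (x @ v @ y)"
proof -
  have "rewrite_step k (x @ u @ y) (x @ v @ y)" if "rewrite_step k u v" for u v
  proof -
    obtain a p q b where "(p, q) \<in> rels k" "set a \<subseteq> {0..k}" "set b \<subseteq> {0..k}"
      "u = a @ p @ b" "v = a @ q @ b"
      using \<open>rewrite_step k u v\<close> unfolding rewrite_step_def by blast
    then show ?thesis unfolding rewrite_step_def using assms(2,3)
      by (intro exI[of _ "x @ a"] exI[of _ p] exI[of _ q] exI[of _ "b @ y"]) auto
  qed
  with assms(1) show ?thesis
    by (induction rule: equivclp_induct) (auto intro: equivclp_into_equivclp)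
qed

lemma word_equiv_append:
  assumes "word_equiv k u u'" "word_equiv k v v'" "set u' \<subseteq> {0..k}" "set v \<subseteq> {0..k}"
  shows "word_equiv k (u @ v) (u' @ v')"
proof -
  have "word_equiv k (u @ v) (u' @ v)"
    using word_equiv_context[OF assms(1), of "[]" v] assms(4) by simp
  also have "word_equiv k (u' @ v) (u' @ v')"
    using word_equiv_context[OF assms(2), of u' "[]"] assms(3) by simp
  finally show ?thesis .
qed

lemma word_equiv_rev:
  assumes "word_equiv k u v"
  shows "word_equiv k (rev u) (rev v)"
proof -
  have rels_rev: "(rev p, rev q) \<in> rels k" if "(p, q) \<in> rels k" for p q
    using that unfolding rels_def by auto
  have "rewrite_step k (rev u) (rev v)" if "rewrite_step k u v" for u v
    using that rels_rev unfolding rewrite_step_def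
    by (metis append_assoc rev_append set_rev)
  with assms show ?thesis
    by (induction rule: equivclp_induct) (auto intro: equivclp_into_equivclp)
qed

lemma word_equiv_commute:
  assumes "x \<le> k" "\<And>y. y \<in> set ys \<Longrightarrow> y \<le> k \<and> isuc k x \<noteq> y \<and> isuc k y \<noteq> x"
  shows "word_equiv k (x # ys) (ys @ [x])"
  using assms(2)
proof (induction ys)
  case Nil
  then show ?case by simp
next
  case (Cons y ys)
  have "([x, y], [y, x]) \<in> rels k"
    unfolding rels_def using assms(1) Cons.prems by auto
  moreover have "set ys \<subseteq> {0..k}"
    using Cons.prems by auto
  ultimately have "rewrite_step k ([] @ [x, y] @ ys) ([] @ [y, x] @ ys)"
    unfolding rewrite_step_def by (metis empty_subsetI empty_set)
  then have "word_equiv k (x # y # ys) (y # x # ys)" by auto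
  also have "word_equiv k (y # x # ys) (y # ys @ [x])"
    using word_equiv_context[OF Cons.IH, of "[y]" "[]"] Cons.prems by simp
  finally show ?case by simp
qed


lemma amiss_le_notin:
  assumes "S \<subseteq> {0..k}" "S \<noteq> {0..k}"
  shows "amiss k S \<le> k" "amiss k S \<notin> S"
proof -
  have "\<exists>a. a \<le> k \<and> a \<notin> S" using assms by auto
  then show "amiss k S \<le> k" "amiss k S \<notin> S"
    unfolding amiss_def using LeastI_ex[of "\<lambda>a. a \<le> k \<and> a \<notin> S"] by auto
qed

lemma card_le_imp_proper: "card A \<le> k \<Longrightarrow> A \<noteq> {0..k}"
  by auto

lemma set_proper_if_length_le:
  assumes "length w \<le> k"
  shows "set w \<noteq> {0..k}"
  using card_length[of w] assms by auto

lemma irank_eq: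
  assumes "amiss k S \<le> k" "x \<le> k"
  shows "irank k S x = (if amiss k S < x then x - amiss k S - 1 else x + k - amiss k S)"
proof (cases "amiss k S < x")
  case True
  then have "x + k - amiss k S = (x - amiss k S - 1) + (k + 1)" using assms by simp
  then have "irank k S x = (x - amiss k S - 1) mod (k + 1)"
    unfolding irank_def by (simp only: mod_add_self2)
  then show ?thesis using True assms by simp
next
  case False
  then show ?thesis unfolding irank_def using assms by simp
qed

lemma irank_inj:
  assumes "amiss k S \<le> k" "x \<le> k" "y \<le> k" "irank k S x = irank k S y"
  shows "x = y"
  using assms irank_eq[OF assms(1) assms(2)] irank_eq[OF assms(1) assms(3)]
  by (auto split: if_splits)

lemma irank_inj_on:
  assumes "amiss k S \<le> k" "A \<subseteq> {0..k}"
  shows "inj_on (irank k S) A"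
  using irank_inj[OF assms(1)] assms(2) by (auto simp: inj_on_def subset_iff)

lemma irank_isuc:
  assumes "amiss k S \<le> k" "x \<le> k" "x \<noteq> amiss k S"
  shows "irank k S (isuc k x) = irank k S x + 1"
proof (cases "x < k")
  case True
  then have "isuc k x = x + 1" unfolding isuc_def by simp
  then show ?thesis
    using irank_eq[OF assms(1,2)] irank_eq[OF assms(1), of "x + 1"] True assms by auto
next
  case False
  then have "x = k" "isuc k x = 0" using assms unfolding isuc_def by auto
  then show ?thesis using irank_eq[OF assms(1,2)] irank_eq[OF assms(1), of 0] assms by auto
qed

lemma isuc_neq:
  assumes "1 \<le> k"
  shows "isuc k x \<noteq> x"
proof -
  consider "x < k" | "x = k" | "x > k" by linarith
  then show ?thesis
  proof cases
    case 3
    have "(x + 1) mod (k + 1) < k + 1" by simp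
    then show ?thesis unfolding isuc_def using 3 by linarith
  qed (use assms in \<open>auto simp: isuc_def\<close>)
qed


section \<open>Straightening the products \<open>d\<^sub>A i\<^sub>B\<close>\<close>

lemma sorted_wrt_irrefl_imp_distinct:
  assumes "\<And>x. \<not> R x x" "sorted_wrt R xs"
  shows "distinct xs"
  using assms(2) by (induction xs) (auto simp: assms(1))

lemma sorted_wrt_unique:
  assumes "asymp R" "sorted_wrt R xs" "sorted_wrt R ys" "set xs = set ys"
  shows "xs = ys"
  using assms(2-4)
proof (induction xs arbitrary: ys)
  case Nil
  then show ?case by simp
next
  case (Cons x xs)
  obtain y ys' where ys: "ys = y # ys'"
    using Cons.prems(3) by (cases ys) auto
  have x: "\<forall>z\<in>set xs. R x z" "sorted_wrt R xs" and y: "\<forall>z\<in>set ys'. R y z" "sorted_wrt R ys'"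
    using Cons.prems(1,2) unfolding ys by auto
  have "x = y"
  proof (rule ccontr)
    assume "x \<noteq> y"
    then have "y \<in> set xs" "x \<in> set ys'"
      using Cons.prems(3) unfolding ys by (auto simp: set_eq_iff)
    then show False using x y assms(1) by (auto dest: asympD)
  qed
  moreover have "x \<notin> set xs" "y \<notin> set ys'"
    using x(1) y(1) assms(1) by (auto dest: asympD)
  ultimately have "set xs = set ys'"
    using Cons.prems(3) unfolding ys by (auto simp: set_eq_iff)
  then show ?case using Cons.IH[OF x(2) y(2)] ys \<open>x = y\<close> by simp
qed

lemma sorted_wrt_split_at_inc:
  fixes f :: "'a \<Rightarrow> 'b::linorder"
  assumes "sorted_wrt (\<lambda>x y. f x < f y) D" "\<forall>y\<in>set D. f y \<noteq> t"
  shows "D = filter (\<lambda>y. f y < t) D @ filter (\<lambda>y. t < f y) D"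
  using assms
proof (induction D)
  case (Cons x D)
  show ?case
  proof (cases "f x < t")
    case False
    then have "\<forall>y\<in>set D. t < f y" using Cons.prems by force
    then show ?thesis using False Cons.prems by (fastforce simp: filter_id_conv filter_empty_conv)
  qed (use Cons in auto)
qed simp

lemma sorted_wrt_split_at_dec:
  fixes f :: "'a \<Rightarrow> 'b::linorder"
  assumes "sorted_wrt (\<lambda>x y. f y < f x) D" "\<forall>y\<in>set D. f y \<noteq> t"
  shows "D = filter (\<lambda>y. t < f y) D @ filter (\<lambda>y. f y < t) D"
  using assms
proof (induction D)
  case (Cons x D)
  show ?case
  proof (cases "t < f x")
    case False
    then have "\<forall>y\<in>set D. f y < t" using Cons.prems by force
    then show ?thesis using False Cons.prems by (fastforce simp: filter_id_conv filter_empty_conv)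
  qed (use Cons in auto)
qed simp

definition ascending :: "nat \<Rightarrow> nat set \<Rightarrow> nat set \<Rightarrow> nat list" where
  "ascending k S A = sort_key (irank k S) (sorted_list_of_set A)"

definition descending :: "nat \<Rightarrow> nat set \<Rightarrow> nat set \<Rightarrow> nat list" where
  "descending k S A = rev (ascending k S A)"

lemma ascending:
  assumes "amiss k S \<le> k" "A \<subseteq> {0..k}"
  shows "set (ascending k S A) = A" "length (ascending k S A) = card A"
    "sorted_wrt (\<lambda>x y. irank k S x < irank k S y) (ascending k S A)"
proof -
  have fin: "finite A" using assms(2) finite_subset by blast
  show set: "set (ascending k S A) = A" "length (ascending k S A) = card A"
    unfolding ascending_def using fin by simp_all
  have "distinct (map (irank k S) (ascending k S A))"
    using set(1) irank_inj_on[OF assms] fin by (simp add: distinct_map ascending_def distinct_sort)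
  moreover have "sorted (map (irank k S) (ascending k S A))"
    unfolding ascending_def by (rule sorted_sort_key)
  ultimately have "sorted_wrt (<) (map (irank k S) (ascending k S A))"
    by (simp add: strict_sorted_iff)
  then show "sorted_wrt (\<lambda>x y. irank k S x < irank k S y) (ascending k S A)"
    by (simp add: sorted_wrt_map)
qed

lemma descending:
  assumes "amiss k S \<le> k" "A \<subseteq> {0..k}"
  shows "set (descending k S A) = A" "length (descending k S A) = card A"
    "sorted_wrt (\<lambda>x y. irank k S y < irank k S x) (descending k S A)"
  using ascending[OF assms] unfolding descending_def by (auto simp: sorted_wrt_rev)

lemma ascending_unique:
  assumes "amiss k S \<le> k" "set w \<subseteq> {0..k}" "sorted_wrt (\<lambda>x y. irank k S x < irank k S y) w"
  shows "ascending k S (set w) = w"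
  using sorted_wrt_unique[OF _ ascending(3)[OF assms(1,2)] assms(3)] ascending(1)[OF assms(1,2)]
  by (simp add: asymp_on_def)

lemma descending_unique:
  assumes "amiss k S \<le> k" "set w \<subseteq> {0..k}" "sorted_wrt (\<lambda>x y. irank k S y < irank k S x) w"
  shows "descending k S (set w) = w"
  using sorted_wrt_unique[OF _ descending(3)[OF assms(1,2)] assms(3)] descending(1)[OF assms(1,2)]
  by (simp add: asymp_on_def)

fun succ_first :: "nat \<Rightarrow> nat list \<Rightarrow> bool" where
  "succ_first k [] = True"
| "succ_first k (x # xs) \<longleftrightarrow> isuc k x \<notin> set xs \<and> succ_first k xs"

lemma succ_first_iff_nth:
  assumes "1 \<le> k"
  shows "succ_first k w \<longleftrightarrow>
    (\<forall>x y. x < length w \<and> y < length w \<and> w ! y = isuc k (w ! x) \<longrightarrow> y < x)"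
proof (induction w)
  case (Cons a w)
  let ?P = "\<lambda>w. \<forall>x y. x < length w \<and> y < length w \<and> w ! y = isuc k (w ! x) \<longrightarrow> y < x"
  show ?case
  proof
    assume h: "succ_first k (a # w)"
    show "?P (a # w)"
    proof (intro allI impI)
      fix x y
      assume xy: "x < length (a # w) \<and> y < length (a # w) \<and> (a # w) ! y = isuc k ((a # w) ! x)"
      show "y < x"
      proof (cases x)
        case 0
        then show ?thesis
          using xy h isuc_neq[OF assms, of a] by (cases y) (auto simp: in_set_conv_nth)
      next
        case (Suc x')
        then show ?thesis using xy h Cons.IH by (cases y) auto
      qed
    qed
  next
    assume h: "?P (a # w)"
    have "isuc k a \<notin> set w"
    proof
      assume "isuc k a \<in> set w"
      then obtain y where "y < length w" "w ! y = isuc k a" by (auto simp: in_set_conv_nth)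
      then show False using h[rule_format, of 0 "Suc y"] by simp
    qed
    moreover have "?P w"
      using h[rule_format, of "Suc x" "Suc y" for x y] by auto
    ultimately show "succ_first k (a # w)" using Cons.IH by simp
  qed
qed simp

lemma valid_order_iff_succ_first:
  assumes "1 \<le> k"
  shows "valid_order k A w \<longleftrightarrow> distinct w \<and> set w = A \<and> succ_first k w"
  unfolding valid_order_def succ_first_iff_nth[OF assms] by auto

lemma descending_succ_first:
  assumes "amiss k S \<le> k" "set w \<subseteq> S" "S \<subseteq> {0..k}" "amiss k S \<notin> S"
    "sorted_wrt (\<lambda>x y. irank k S y < irank k S x) w"
  shows "succ_first k w"
  using assms(2,5)
proof (induction w)
  case (Cons a w)
  have "a \<le> k" "a \<noteq> amiss k S" using Cons.prems assms by auto
  then have "isuc k a \<notin> set w" using Cons.prems irank_isuc[OF assms(1)] by fastforce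
  then show ?case using Cons by simp
qed simp

lemma descending_insert:
  assumes am: "amiss k S \<le> k" "S \<subseteq> {0..k}" and x: "x \<in> S" "x \<notin> set D"
    and D: "set D \<subseteq> S" "sorted_wrt (\<lambda>x y. irank k S y < irank k S x) D"
  shows "D = filter (\<lambda>y. irank k S x < irank k S y) D @ filter (\<lambda>y. irank k S y < irank k S x) D"
    "descending k S (insert x (set D)) =
       filter (\<lambda>y. irank k S x < irank k S y) D @ x # filter (\<lambda>y. irank k S y < irank k S x) D"
proof -
  let ?f = "irank k S"
  let ?G = "filter (\<lambda>y. ?f x < ?f y) D" and ?L = "filter (\<lambda>y. ?f y < ?f x) D"
  have "?f y \<noteq> ?f x" if "y \<in> set D" for y
  proof
    assume "?f y = ?f x"
    moreover have "y \<le> k" "x \<le> k" using that D(1) x(1) am(2) by auto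
    ultimately have "y = x" using irank_inj[OF am(1)] by blast
    then show False using that x(2) by simp
  qed
  then show DGL: "D = ?G @ ?L"
    by (intro sorted_wrt_split_at_dec[OF D(2)]) blast
  have "sorted_wrt (\<lambda>x y. ?f y < ?f x) ?G" "sorted_wrt (\<lambda>x y. ?f y < ?f x) ?L"
    by (auto intro: sorted_wrt_filter[OF D(2)])
  then have sorted: "sorted_wrt (\<lambda>x y. ?f y < ?f x) (?G @ x # ?L)"
    unfolding sorted_wrt_append by (auto dest: less_trans)
  have "set D = set ?G \<union> set ?L" using DGL by (metis set_append)
  then have set: "set (?G @ x # ?L) = insert x (set D)" "set (?G @ x # ?L) \<subseteq> {0..k}"
    using D(1) x(1) am(2) by auto
  show "descending k S (insert x (set D)) = ?G @ x # ?L"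
    using descending_unique[OF am(1) set(2) sorted] unfolding set(1) .
qed

lemma word_equiv_cons_descending:
  assumes am: "amiss k S \<le> k" "S \<subseteq> {0..k}" "amiss k S \<notin> S"
    and x: "x \<in> S" "x \<notin> set D" "isuc k x \<notin> set D"
    and D: "set D \<subseteq> S" "sorted_wrt (\<lambda>x y. irank k S y < irank k S x) D"
  shows "word_equiv k (x # D) (descending k S (insert x (set D)))"
proof -
  let ?f = "irank k S"
  let ?G = "filter (\<lambda>y. ?f x < ?f y) D" and ?L = "filter (\<lambda>y. ?f y < ?f x) D"
  note split = descending_insert[OF am(1,2) x(1,2) D]
  have "word_equiv k (x # ?G) (?G @ [x])"
  proof (rule word_equiv_commute)
    show "x \<le> k" using x am by auto
    fix y assume "y \<in> set ?G"
    then have "y \<in> set D" "?f x < ?f y" by auto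
    then have yk: "y \<le> k" "y \<noteq> amiss k S" using D(1) am by auto
    have "isuc k x \<noteq> y" using \<open>y \<in> set D\<close> x(3) by auto
    moreover have "?f (isuc k y) = ?f y + 1" using irank_isuc[OF am(1) yk] .
    then have "isuc k y \<noteq> x" using \<open>?f x < ?f y\<close> by auto
    ultimately show "y \<le> k \<and> isuc k x \<noteq> y \<and> isuc k y \<noteq> x" using yk by simp
  qed
  moreover have "set ?L \<subseteq> {0..k}" using D(1) am(2) by auto
  ultimately have "word_equiv k ([] @ (x # ?G) @ ?L) ([] @ (?G @ [x]) @ ?L)"
    by (intro word_equiv_context) auto
  then show ?thesis using split by simp
qed

lemma word_equiv_descending:
  assumes "amiss k S \<le> k" "S \<subseteq> {0..k}" "amiss k S \<notin> S"
    and "succ_first k w" "distinct w" "set w \<subseteq> S"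
  shows "word_equiv k w (descending k S (set w))"
  using assms(4-6)
proof (induction w)
  case Nil
  then show ?case by (simp add: descending_def ascending_def)
next
  case (Cons x xs)
  let ?D = "descending k S (set xs)"
  have xs: "set xs \<subseteq> {0..k}" using Cons.prems assms(2) by auto
  note D = descending[OF assms(1) xs]
  have "word_equiv k (x # xs) (x # ?D)"
    using word_equiv_context[OF Cons.IH, of "[x]" "[]"] Cons.prems assms(2) by auto
  also have "word_equiv k (x # ?D) (descending k S (insert x (set ?D)))"
    using Cons.prems D by (intro word_equiv_cons_descending[OF assms(1-3)]) auto
  finally show ?case using D(1) by simp
qed

lemma dword_valid:
  assumes "A \<subseteq> {0..k}" "A \<noteq> {0..k}" "1 \<le> k"
  shows "valid_order k A (dword k A)"
proof -
  note am = amiss_le_notin[OF assms(1,2)]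
  have "valid_order k A (descending k A A)"
    unfolding valid_order_iff_succ_first[OF assms(3)]
    using descending[OF am(1) assms(1)] descending_succ_first[OF am(1) _ assms(1) am(2)]
    by (auto intro: sorted_wrt_irrefl_imp_distinct)
  then show ?thesis unfolding dword_def by (rule someI)
qed

lemma word_equiv_dword:
  assumes "A \<subseteq> S" "S \<subseteq> {0..k}" "S \<noteq> {0..k}" "1 \<le> k"
  shows "word_equiv k (dword k A) (descending k S A)"
proof -
  have "valid_order k A (dword k A)" using dword_valid assms by blast
  then have "distinct (dword k A)" "set (dword k A) = A" "succ_first k (dword k A)"
    using valid_order_iff_succ_first[OF assms(4)] by auto
  moreover note am = amiss_le_notin[OF assms(2,3)]
  ultimately show ?thesis
    using word_equiv_descending[OF am(1) assms(2) am(2), of "dword k A"] assms(1) by simp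
qed

definition hook_word :: "nat \<Rightarrow> nat set \<Rightarrow> nat set \<Rightarrow> nat list" where
  "hook_word k A B = descending k (A \<union> B) A @ ascending k (A \<union> B) B"

lemma word_equiv_hook_word:
  assumes "A \<subseteq> {0..k}" "B \<subseteq> {0..k}" "A \<union> B \<noteq> {0..k}" "1 \<le> k"
  shows "word_equiv k (dword k A @ rev (dword k B)) (hook_word k A B)"
proof -
  let ?S = "A \<union> B"
  have S: "?S \<subseteq> {0..k}" using assms by auto
  note am = amiss_le_notin[OF S assms(3)]
  have "word_equiv k (dword k A) (descending k ?S A)"
    using assms by (intro word_equiv_dword) auto
  moreover have "word_equiv k (rev (dword k B)) (ascending k ?S B)"
    using word_equiv_rev[OF word_equiv_dword[of B ?S k]] assms unfolding descending_def by auto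
  moreover have "set (dword k B) = B"
    using dword_valid[of B k] assms unfolding valid_order_def by auto
  ultimately show ?thesis unfolding hook_word_def
    using word_equiv_append descending(1)[OF am(1) assms(1)] assms by auto
qed

definition is_valley :: "('a \<Rightarrow> 'b::linorder) \<Rightarrow> 'a list \<Rightarrow> nat \<Rightarrow> bool" where
  "is_valley f w a \<longleftrightarrow> sorted_wrt (\<lambda>x y. f y < f x) (take a w) \<and> sorted_wrt (\<lambda>x y. f x < f y) (drop a w)"

definition valleys :: "nat \<Rightarrow> nat list \<Rightarrow> nat set" where
  "valleys k w = {a. a \<le> length w \<and> is_valley (irank k (set w)) w a}"

definition words :: "nat \<Rightarrow> nat \<Rightarrow> nat list set" where
  "words k r = {w. set w \<subseteq> {0..k} \<and> length w = r}"

lemma finite_words: "finite (words k r)"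
  unfolding words_def by (rule finite_lists_length_eq) simp

lemma hook_word:
  assumes "A \<subseteq> {0..k}" "B \<subseteq> {0..k}" "card A + card B \<le> k"
  shows "set (take (card A) (hook_word k A B)) = A" "set (drop (card A) (hook_word k A B)) = B"
    "hook_word k A B \<in> words k (card A + card B)" "card A \<in> valleys k (hook_word k A B)"
proof -
  have "card (A \<union> B) \<le> k" using card_Un_le[of A B] assms by simp
  then have am: "amiss k (A \<union> B) \<le> k"
    using amiss_le_notin[of "A \<union> B" k] card_le_imp_proper assms by blast
  note dA = descending[OF am assms(1)] and aB = ascending[OF am assms(2)]
  have take: "take (card A) (hook_word k A B) = descending k (A \<union> B) A"
    and drop: "drop (card A) (hook_word k A B) = ascending k (A \<union> B) B"
    unfolding hook_word_def using dA(2) by simp_all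
  show "set (take (card A) (hook_word k A B)) = A" "set (drop (card A) (hook_word k A B)) = B"
    using take drop dA(1) aB(1) by simp_all
  have set: "set (hook_word k A B) = A \<union> B" unfolding hook_word_def using dA aB by simp
  show "hook_word k A B \<in> words k (card A + card B)"
    unfolding words_def hook_word_def using dA aB assms by auto
  show "card A \<in> valleys k (hook_word k A B)"
    unfolding valleys_def is_valley_def set take drop using dA aB
    by (simp add: hook_word_def)
qed

lemma hook_word_take_drop:
  assumes "w \<in> words k r" "r \<le> k" "a \<in> valleys k w"
  shows "hook_word k (set (take a w)) (set (drop a w)) = w"
    "set (take a w) \<subseteq> {0..k}" "card (set (take a w)) = a"
    "set (drop a w) \<subseteq> {0..k}" "card (set (drop a w)) = r - a"
proof -
  let ?f = "irank k (set w)"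
  have Sk: "set w \<subseteq> {0..k}" "length w = r" "a \<le> r"
    using assms unfolding words_def valleys_def by auto
  then have am: "amiss k (set w) \<le> k"
    using amiss_le_notin set_proper_if_length_le[of w k] assms(2) by auto
  have dec: "sorted_wrt (\<lambda>x y. ?f y < ?f x) (take a w)"
    and inc: "sorted_wrt (\<lambda>x y. ?f x < ?f y) (drop a w)"
    using assms(3) unfolding valleys_def is_valley_def by auto
  show sub: "set (take a w) \<subseteq> {0..k}" "set (drop a w) \<subseteq> {0..k}"
    using Sk(1) set_take_subset set_drop_subset by fastforce+
  have "distinct (take a w)" "distinct (drop a w)"
    using dec inc by (auto intro: sorted_wrt_irrefl_imp_distinct)
  then show "card (set (take a w)) = a" "card (set (drop a w)) = r - a"
    using Sk by (simp_all add: distinct_card)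
  have un: "set (take a w) \<union> set (drop a w) = set w"
    by (metis append_take_drop_id set_append)
  show "hook_word k (set (take a w)) (set (drop a w)) = w"
    unfolding hook_word_def un
    using descending_unique[OF am sub(1) dec] ascending_unique[OF am sub(2) inc] by simp
qed

lemma hook_word_bij:
  assumes "a + b \<le> k"
  shows "bij_betw (\<lambda>(A, B). hook_word k A B)
    ({A. A \<subseteq> {0..k} \<and> card A = a} \<times> {B. B \<subseteq> {0..k} \<and> card B = b})
    {w \<in> words k (a + b). a \<in> valleys k w}"
proof (rule bij_betw_byWitness[where f' = "\<lambda>w. (set (take a w), set (drop a w))"])
  note recover = hook_word_take_drop[of _ k "a + b" a]
  show "\<forall>p\<in>{A. A \<subseteq> {0..k} \<and> card A = a} \<times> {B. B \<subseteq> {0..k} \<and> card B = b}.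
      (\<lambda>w. (set (take a w), set (drop a w))) ((\<lambda>(A, B). hook_word k A B) p) = p"
    using assms hook_word(1,2) by auto
  show "\<forall>w\<in>{w \<in> words k (a + b). a \<in> valleys k w}.
      (\<lambda>(A, B). hook_word k A B) (set (take a w), set (drop a w)) = w"
    using assms recover(1) by auto
  show "(\<lambda>(A, B). hook_word k A B) `
      ({A. A \<subseteq> {0..k} \<and> card A = a} \<times> {B. B \<subseteq> {0..k} \<and> card B = b})
      \<subseteq> {w \<in> words k (a + b). a \<in> valleys k w}"
    using assms hook_word(3,4) by auto
  show "(\<lambda>w. (set (take a w), set (drop a w))) ` {w \<in> words k (a + b). a \<in> valleys k w}
      \<subseteq> {A. A \<subseteq> {0..k} \<and> card A = a} \<times> {B. B \<subseteq> {0..k} \<and> card B = b}"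
    using assms recover(2-5) by (fastforce simp: image_subset_iff)
qed

lemma sum_hook_words:
  assumes "a + b \<le> k"
  shows "(\<Sum>A\<in>{A. A \<subseteq> {0..k} \<and> card A = a}. \<Sum>B\<in>{B. B \<subseteq> {0..k} \<and> card B = b}.
      wd (hook_word k A B)) = usum {w \<in> words k (a + b). a \<in> valleys k w}"
  unfolding usum_def sum.cartesian_product
  using sum.reindex_bij_betw[OF hook_word_bij[OF assms], of wd]
  by (simp add: case_prod_beta')

lemma h_el_e_el_equiv:
  assumes "a \<le> r" "r \<le> k" "1 \<le> k"
  shows "amul (h_el k a) (e_el k (r - a)) - usum {w \<in> words k r. a \<in> valleys k w} \<in> rel_ideal k"
proof -
  let ?SA = "{A. A \<subseteq> {0..k} \<and> card A = a}" and ?SB = "{B. B \<subseteq> {0..k} \<and> card B = r - a}"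
  have "amul (h_el k a) (e_el k (r - a)) = (\<Sum>A\<in>?SA. \<Sum>B\<in>?SB. wd (dword k A @ rev (dword k B)))"
    unfolding h_el_def e_el_def d_el_def i_el_def amul_sum_left amul_sum_right amul_wd
    by (rule sum.swap)
  moreover have "usum {w \<in> words k r. a \<in> valleys k w} = (\<Sum>A\<in>?SA. \<Sum>B\<in>?SB. wd (hook_word k A B))"
    using sum_hook_words[of a "r - a" k] assms by simp
  ultimately have "amul (h_el k a) (e_el k (r - a)) - usum {w \<in> words k r. a \<in> valleys k w} =
      (\<Sum>A\<in>?SA. \<Sum>B\<in>?SB. wd (dword k A @ rev (dword k B)) - wd (hook_word k A B))"
    by (simp add: sum_subtractf)
  also have "\<dots> \<in> rel_ideal k"
  proof (intro rel_ideal_sum word_equiv_imp_rel_ideal word_equiv_hook_word)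
    fix A B assume A: "A \<in> ?SA" and B: "B \<in> ?SB"
    show "A \<subseteq> {0..k}" "B \<subseteq> {0..k}" "1 \<le> k" using A B assms by auto
    have "card (A \<union> B) \<le> k" using card_Un_le[of A B] A B assms by simp
    then show "A \<union> B \<noteq> {0..k}" by (rule card_le_imp_proper)
  qed
  finally show ?thesis .
qed


section \<open>The power sum \<open>p\<^sub>r\<close> as a weighted sum over valleys\<close>

lemma sum_triangle:
  fixes F :: "nat \<Rightarrow> 'a::comm_semiring_1"
  shows "(\<Sum>i<n. \<Sum>m\<le>i. F m) = (\<Sum>m<n. of_nat (n - m) * F m)"
proof (induction n)
  case (Suc n)
  have "(\<Sum>m<Suc n. of_nat (Suc n - m) * F m) = (\<Sum>m<Suc n. of_nat (n - m) * F m + F m)"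
    by (intro sum.cong) (auto simp: algebra_simps Suc_diff_le)
  also have "\<dots> = (\<Sum>m<n. of_nat (n - m) * F m) + (\<Sum>m\<le>n. F m)"
    by (simp add: sum.distrib lessThan_Suc_atMost[symmetric])
  finally show ?case using Suc by simp
qed simp

lemma alternating_hook_sum:
  fixes g :: "nat \<Rightarrow> 'a::comm_ring_1"
  shows "(\<Sum>i<r. (-1) ^ i * (\<Sum>j\<le>i. (-1) ^ j * g (r - i + j))) = (\<Sum>a\<le>r. (-1) ^ (r - a) * of_nat a * g a)"
proof -
  have inner: "(-1) ^ i * (\<Sum>j\<le>i. (-1) ^ j * g (r - i + j)) = (\<Sum>m\<le>i. (-1) ^ m * g (r - m))"
    if "i < r" for i
  proof -
    have "(\<Sum>j\<le>i. (-1) ^ j * g (r - i + j)) = (\<Sum>m\<le>i. (-1) ^ (i - m) * g (r - m))"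
      using sum.atLeastAtMost_rev[of "\<lambda>j. (-1) ^ j * g (r - i + j)" 0 i] that
      by (simp add: atLeast0AtMost)
    moreover have "(-1) ^ i * (-1) ^ (i - m) = ((-1) ^ m :: 'a)" if "m \<le> i" for m
    proof -
      have "(-1) ^ i * (-1) ^ (i - m) = ((-1) ^ (i + (i - m)) :: 'a)" by (simp add: power_add)
      also have "i + (i - m) = m + 2 * (i - m)" using that by simp
      finally show ?thesis by (simp add: power_add power_mult)
    qed
    ultimately show ?thesis
      by (simp add: sum_distrib_left mult.assoc[symmetric])
  qed
  have "(\<Sum>i<r. (-1) ^ i * (\<Sum>j\<le>i. (-1) ^ j * g (r - i + j))) = (\<Sum>i<r. \<Sum>m\<le>i. (-1) ^ m * g (r - m))"
    using inner by simp
  also have "\<dots> = (\<Sum>m<r. of_nat (r - m) * ((-1) ^ m * g (r - m)))"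
    by (rule sum_triangle)
  also have "\<dots> = (\<Sum>m\<le>r. of_nat (r - m) * ((-1) ^ m * g (r - m)))"
    by (simp add: lessThan_Suc_atMost[symmetric])
  also have "\<dots> = (\<Sum>a\<le>r. (-1) ^ (r - a) * of_nat a * g a)"
    using sum.atLeastAtMost_rev[of "\<lambda>m. of_nat (r - m) * ((-1) ^ m * g (r - m))" 0 r]
    by (simp add: atLeast0AtMost algebra_simps)
  finally show ?thesis .
qed

definition valley_weight :: "nat \<Rightarrow> nat \<Rightarrow> falg" where
  "valley_weight k r w = (if w \<in> words k r then \<Sum>a\<in>valleys k w. (-1) ^ (r - a) * int a else 0)"

lemma usum_apply: "finite S \<Longrightarrow> usum S w = (if w \<in> S then 1 else 0)"
  unfolding usum_def sum_fun_apply wd_def by (simp add: eq_commute)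

lemma valley_weight_alternating:
  "valley_weight k r = (\<Sum>i<r. smul ((-1) ^ i)
     (\<Sum>j\<le>i. smul ((-1) ^ j) (usum {w \<in> words k r. r - i + j \<in> valleys k w})))"
  (is "_ = ?S")
proof
  fix w
  let ?g = "\<lambda>a. if a \<in> valleys k w then 1 else 0 :: int"
  have "(\<Sum>i<r. smul ((-1) ^ i)
      (\<Sum>j\<le>i. smul ((-1) ^ j) (usum {w \<in> words k r. r - i + j \<in> valleys k w}))) w
    = (if w \<in> words k r then \<Sum>i<r. (-1) ^ i * (\<Sum>j\<le>i. (-1) ^ j * ?g (r - i + j)) else 0)"
    by (simp add: sum_fun_apply smul_def usum_apply finite_words)
  also have "\<dots> = (if w \<in> words k r then \<Sum>a\<le>r. (-1) ^ (r - a) * int a * ?g a else 0)"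
    using alternating_hook_sum[where g = ?g] by simp
  also have "\<dots> = valley_weight k r w"
  proof (cases "w \<in> words k r")
    case True
    then have V: "{..r} \<inter> valleys k w = valleys k w"
      unfolding valleys_def words_def by auto
    have "(\<Sum>a\<le>r. (-1) ^ (r - a) * int a * ?g a) = (\<Sum>a\<le>r. if a \<in> valleys k w then (-1) ^ (r - a) * int a else 0)"
      by (intro sum.cong) auto
    also have "\<dots> = (\<Sum>a\<in>valleys k w. (-1) ^ (r - a) * int a)"
      by (simp add: sum.inter_restrict[symmetric] V)
    finally show ?thesis using True unfolding valley_weight_def by simp
  qed (simp add: valley_weight_def)
  finally show "valley_weight k r w = ?S w" by simp
qed

lemma p_el_equiv_valley_weight:
  assumes "1 \<le> r" "r \<le> k"
  shows "p_el k r - valley_weight k r \<in> rel_ideal k"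
proof -
  let ?W = "\<lambda>a. usum {w \<in> words k r. a \<in> valleys k w}"
  have "p_el k r - valley_weight k r = (\<Sum>i<r. smul ((-1) ^ i) (hook_s k r i)
      - smul ((-1) ^ i) (\<Sum>j\<le>i. smul ((-1) ^ j) (?W (r - i + j))))"
    unfolding p_el_def valley_weight_alternating by (rule sum_subtractf[symmetric])
  also have "\<dots> = (\<Sum>i<r. smul ((-1) ^ i) (\<Sum>j\<le>i. smul ((-1) ^ j)
      (amul (h_el k (r - i + j)) (e_el k (i - j)) - ?W (r - i + j))))"
    unfolding hook_s_def by (simp only: smul_diff sum_subtractf)
  also have "\<dots> \<in> rel_ideal k"
  proof (intro rel_ideal_sum rel_ideal_smul)
    fix i j assume "i \<in> {..<r}" "j \<in> {..i}"
    then have "i - j = r - (r - i + j)" "r - i + j \<le> r" by auto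
    moreover have "amul (h_el k (r - i + j)) (e_el k (r - (r - i + j))) - ?W (r - i + j) \<in> rel_ideal k"
      using h_el_e_el_equiv[of "r - i + j" r k] assms \<open>r - i + j \<le> r\<close> by simp
    ultimately show "amul (h_el k (r - i + j)) (e_el k (i - j)) - ?W (r - i + j) \<in> rel_ideal k"
      by metis
  qed
  finally show ?thesis .
qed


section \<open>Valleys and hook types\<close>

definition valley_at :: "(nat \<Rightarrow> 'a::linorder) \<Rightarrow> nat \<Rightarrow> nat \<Rightarrow> bool" where
  "valley_at g n a \<longleftrightarrow> (\<forall>t. t + 1 < a \<longrightarrow> g (t + 1) < g t) \<and> (\<forall>t. a \<le> t \<and> t + 1 < n \<longrightarrow> g t < g (t + 1))"

lemma valley_at_consecutive:
  assumes "valley_at g n a" "valley_at g n b" "a < b" "b \<le> n"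
  shows "b = a + 1"
proof (rule ccontr)
  assume "b \<noteq> a + 1"
  then have "g (a + 1) < g a" "g a < g (a + 1)" using assms unfolding valley_at_def by auto
  then show False by simp
qed

lemma valley_at_shift_left:
  assumes "valley_at g n a" "0 < a" "a < n" "g (a - 1) < g a"
  shows "valley_at g n (a - 1)"
  unfolding valley_at_def
proof (intro conjI allI impI)
  fix t assume "a - 1 \<le> t \<and> t + 1 < n"
  then show "g t < g (t + 1)" using assms unfolding valley_at_def by (cases "t = a - 1") auto
qed (use assms in \<open>auto simp: valley_at_def\<close>)

lemma valley_at_shift_right:
  assumes "valley_at g n a" "0 < a" "a < n" "g a < g (a - 1)"
  shows "valley_at g n (a + 1)"
  unfolding valley_at_def
proof (intro conjI allI impI)
  fix t assume "t + 1 < a + 1"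
  then show "g (t + 1) < g t" using assms unfolding valley_at_def by (cases "t = a - 1") auto
qed (use assms in \<open>auto simp: valley_at_def\<close>)

lemma valley_at_hook:
  assumes "valley_at g n a" "a \<le> n" "1 \<le> n"
  shows "(\<exists>j. 1 \<le> j \<and> j \<le> n \<and> valley_at g n (j - 1) \<and> valley_at g n j) \<or>
         (\<exists>j. 1 \<le> j \<and> j < n \<and> valley_at g n j \<and> g (j - 1) = g j)"
proof -
  consider "a = 0" | "a = n" | "0 < a \<and> a < n \<and> g (a - 1) < g a"
    | "0 < a \<and> a < n \<and> g a < g (a - 1)" | "0 < a \<and> a < n \<and> g (a - 1) = g a"
    using assms linorder_less_linear[of "g (a - 1)" "g a"] le_neq_implies_less by blast
  then show ?thesis
  proof cases
    case 1
    then have "valley_at g n 1" using assms unfolding valley_at_def by auto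
    then show ?thesis using assms 1 by auto
  next
    case 2
    then have "valley_at g n (n - 1)" using assms unfolding valley_at_def by auto
    then show ?thesis using assms 2 by (intro disjI1 exI[of _ n]) auto
  next
    case 3
    then show ?thesis using assms valley_at_shift_left[OF assms(1)] by (intro disjI1 exI[of _ a]) auto
  next
    case 4
    then show ?thesis using assms valley_at_shift_right[OF assms(1)]
      by (intro disjI1 exI[of _ "a + 1"]) auto
  next
    case 5
    then show ?thesis using assms by (intro disjI2 exI[of _ a]) auto
  qed
qed

lemma valleys_V:
  assumes "1 \<le> j" "j \<le> n" "valley_at g n (j - 1)" "valley_at g n j"
  shows "{a. a \<le> n \<and> valley_at g n a} = {j - 1, j}"
proof -
  have "a \<in> {j - 1, j}" if a: "a \<le> n" "valley_at g n a" for a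
  proof -
    consider "a < j - 1" | "j < a" | "a \<in> {j - 1, j}" by force
    then show ?thesis
    proof cases
      case 1
      then have "j = a + 1" using valley_at_consecutive[of g n a j] a assms by auto
      with 1 show ?thesis by simp
    next
      case 2
      then have "j - 1 < a" by simp
      then have "a = j - 1 + 1" using valley_at_consecutive[of g n "j - 1" a] a assms by blast
      with 2 assms(1) show ?thesis by simp
    qed
  qed
  then show ?thesis using assms by auto
qed

lemma valleys_U:
  assumes "1 \<le> j" "j < n" "valley_at g n j" "g (j - 1) = g j"
  shows "{a. a \<le> n \<and> valley_at g n a} = {j}"
proof -
  have "a = j" if a: "a \<le> n" "valley_at g n a" for a
  proof (rule ccontr)
    assume "a \<noteq> j"
    then consider "a < j" | "j < a" by linarith
    then show False
    proof cases
      case 1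
      then have "j = a + 1" using valley_at_consecutive[of g n a j] a assms by auto
      then show False using a assms unfolding valley_at_def by auto
    next
      case 2
      then have "a = j + 1" using valley_at_consecutive[of g n j a] a assms by auto
      then have "g j < g (j - 1)" using a assms unfolding valley_at_def
        by (metis add_less_mono1 le_add_diff_inverse2 less_add_one)
      then show False using assms by simp
    qed
  qed
  then show ?thesis using assms by auto
qed

lemma ascents_V:
  assumes "1 \<le> j" "valley_at g n (j - 1)" "valley_at g n j"
  shows "{t. t + 1 < n \<and> g t < g (t + 1)} = {j - 1..<n - 1}"
proof -
  have "j - 1 \<le> t" if "g t < g (t + 1)" for t
    using that assms(3) unfolding valley_at_def by (metis add_diff_cancel_right' le_diff_conv
        less_asym not_less)
  then show ?thesis using assms(2) unfolding valley_at_def by auto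
qed

lemma ascents_U:
  assumes "1 \<le> j" "valley_at g n j" "g (j - 1) = g j"
  shows "{t. t + 1 < n \<and> g t < g (t + 1)} = {j..<n - 1}"
proof -
  have "j \<le> t" if "g t < g (t + 1)" for t
  proof (rule ccontr)
    assume "\<not> j \<le> t"
    then consider "t + 1 < j" | "t + 1 = j" by linarith
    then show False
      using that assms unfolding valley_at_def by cases (auto dest: less_asym)
  qed
  then show ?thesis using assms(2) unfolding valley_at_def by auto
qed

lemma is_valley_iff_valley_at:
  assumes "a \<le> length w"
  shows "is_valley f w a \<longleftrightarrow> valley_at (\<lambda>t. f (w ! t)) (length w) a"
proof -
  have tr: "transp (\<lambda>x y. f y < f x)" "transp (\<lambda>x y. f x < f y)"
    by (auto simp: transp_def)
  have "sorted_wrt (\<lambda>x y. f y < f x) (take a w) \<longleftrightarrow> (\<forall>t. t + 1 < a \<longrightarrow> f (w ! (t + 1)) < f (w ! t))"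
    unfolding sorted_wrt_iff_nth_Suc_transp[OF tr(1)] using assms by auto
  moreover have "sorted_wrt (\<lambda>x y. f x < f y) (drop a w) \<longleftrightarrow>
      (\<forall>t. a \<le> t \<and> t + 1 < length w \<longrightarrow> f (w ! t) < f (w ! (t + 1)))"
    unfolding sorted_wrt_iff_nth_Suc_transp[OF tr(2)]
  proof (intro iffI allI impI)
    fix t assume h: "\<forall>i. Suc i < length (drop a w) \<longrightarrow> f (drop a w ! i) < f (drop a w ! Suc i)"
      and t: "a \<le> t \<and> t + 1 < length w"
    have "Suc (t - a) < length (drop a w)" using t by auto
    then have "f (drop a w ! (t - a)) < f (drop a w ! Suc (t - a))" using h by blast
    moreover have "drop a w ! (t - a) = w ! t" "drop a w ! Suc (t - a) = w ! (t + 1)"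
      using t assms by auto
    ultimately show "f (w ! t) < f (w ! (t + 1))" by simp
  next
    fix i assume "\<forall>t. a \<le> t \<and> t + 1 < length w \<longrightarrow> f (w ! t) < f (w ! (t + 1))"
      and "Suc i < length (drop a w)"
    then show "f (drop a w ! i) < f (drop a w ! Suc i)" using assms by auto
  qed
  ultimately show ?thesis unfolding is_valley_def valley_at_def by simp
qed

abbreviation rank_seq :: "nat \<Rightarrow> nat list \<Rightarrow> nat \<Rightarrow> nat" where
  "rank_seq k w \<equiv> \<lambda>t. irank k (set w) (w ! t)"

lemma valleys_eq: "valleys k w = {a. a \<le> length w \<and> valley_at (rank_seq k w) (length w) a}"
  unfolding valleys_def using is_valley_iff_valley_at by blast

lemma hookV_at_iff:
  "hookV_at k w j \<longleftrightarrow> 1 \<le> j \<and> j \<le> length w \<and>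
     valley_at (rank_seq k w) (length w) (j - 1) \<and> valley_at (rank_seq k w) (length w) j"
proof -
  have left: "(\<forall>t. t + 1 < j \<longrightarrow> P t) \<longleftrightarrow> (\<forall>t. t + 1 < j - 1 \<longrightarrow> P t) \<and> (\<forall>t. t + 1 < j \<longrightarrow> P t)"
    for P :: "nat \<Rightarrow> bool"
    by auto
  have right: "(\<forall>t. j - 1 \<le> t \<and> t + 1 < length w \<longrightarrow> P t) \<longleftrightarrow>
      (\<forall>t. j - 1 \<le> t \<and> t + 1 < length w \<longrightarrow> P t) \<and> (\<forall>t. j \<le> t \<and> t + 1 < length w \<longrightarrow> P t)"
    for P :: "nat \<Rightarrow> bool"
    by auto
  show ?thesis unfolding hookV_at_def valley_at_def ilt_def
    by (subst left, subst right) blast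
qed

lemma hookU_at_iff:
  assumes "amiss k (set w) \<le> k" "set w \<subseteq> {0..k}"
  shows "hookU_at k w j \<longleftrightarrow> 1 \<le> j \<and> j < length w \<and>
    valley_at (rank_seq k w) (length w) j \<and> rank_seq k w (j - 1) = rank_seq k w j"
proof -
  have "w ! (j - 1) = w ! j \<longleftrightarrow> rank_seq k w (j - 1) = rank_seq k w j"
    if "1 \<le> j" "j < length w"
  proof
    assume "rank_seq k w (j - 1) = rank_seq k w j"
    moreover have "w ! (j - 1) \<in> set w" "w ! j \<in> set w" using that by auto
    then have "w ! (j - 1) \<le> k" "w ! j \<le> k" using assms(2) by auto
    ultimately show "w ! (j - 1) = w ! j" using irank_inj[OF assms(1)] by blast
  qed simp
  then show ?thesis unfolding hookU_at_def valley_at_def ilt_def by auto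
qed

lemma asc_eq: "asc k w = card {t. t + 1 < length w \<and> rank_seq k w t < rank_seq k w (t + 1)}"
  unfolding asc_def ilt_def ..

lemma valleys_hookV:
  assumes "hookV_at k w j"
  shows "valleys k w = {j - 1, j}" "asc k w = length w - j"
proof -
  have j: "1 \<le> j" "j \<le> length w" "valley_at (rank_seq k w) (length w) (j - 1)"
    "valley_at (rank_seq k w) (length w) j"
    using assms unfolding hookV_at_iff by auto
  show "valleys k w = {j - 1, j}" unfolding valleys_eq by (rule valleys_V[OF j])
  show "asc k w = length w - j" unfolding asc_eq ascents_V[OF j(1,3,4)] using j(1) by simp
qed

lemma valleys_hookU:
  assumes "amiss k (set w) \<le> k" "set w \<subseteq> {0..k}" "hookU_at k w j"
  shows "valleys k w = {j}" "asc k w = length w - j - 1"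
proof -
  have j: "1 \<le> j" "j < length w" "valley_at (rank_seq k w) (length w) j"
    "rank_seq k w (j - 1) = rank_seq k w j"
    using assms(3) unfolding hookU_at_iff[OF assms(1,2)] by auto
  show "valleys k w = {j}" unfolding valleys_eq by (rule valleys_U[OF j])
  show "asc k w = length w - j - 1" unfolding asc_eq ascents_U[OF j(1,3,4)] by simp
qed

lemma not_hookV_and_hookU:
  assumes "amiss k (set w) \<le> k" "set w \<subseteq> {0..k}" "hookV_at k w j" "hookU_at k w j'"
  shows False
proof -
  have "{j - 1, j} = valleys k w" using valleys_hookV(1)[OF assms(3)] by (rule sym)
  also have "\<dots> = {j'}" by (rule valleys_hookU(1)[OF assms(1,2,4)])
  finally have "{j - 1, j} = {j'}" .
  then have "j - 1 \<in> {j'}" "j \<in> {j'}" by blast+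
  then have "j - 1 = j" by simp
  moreover have "1 \<le> j" using assms(3) unfolding hookV_at_def by simp
  ultimately show False by linarith
qed

lemma hook_if_valley:
  assumes "amiss k (set w) \<le> k" "set w \<subseteq> {0..k}" "w \<noteq> []" "valleys k w \<noteq> {}"
  shows "(\<exists>j. hookV_at k w j) \<or> (\<exists>j. hookU_at k w j)"
proof -
  obtain a where "a \<le> length w" "valley_at (rank_seq k w) (length w) a"
    using assms(4) unfolding valleys_eq by auto
  from valley_at_hook[OF this(2,1)] assms(3) show ?thesis
    unfolding hookV_at_iff hookU_at_iff[OF assms(1,2)] by (simp add: Suc_le_eq)
qed


definition movable :: "('a \<Rightarrow> 'b::linorder) \<Rightarrow> 'a \<Rightarrow> 'a list \<Rightarrow> 'a list \<Rightarrow> 'a list \<Rightarrow> bool" where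
  "movable f c P X Q \<longleftrightarrow> X \<noteq> [] \<and> (\<forall>y\<in>set P. f c < f y) \<and> (\<forall>y\<in>set X. f y < f c) \<and>
     (\<forall>y\<in>set Q. f c < f y)"

lemma movable_valley_before_gt:
  assumes "movable f c P X Q" "is_valley f (P @ c # X @ Q) b"
  shows "length P < b"
proof (rule ccontr)
  assume "\<not> length P < b"
  then have "sorted_wrt (\<lambda>x y. f x < f y) (drop b P @ c # X @ Q)"
    using assms(2) unfolding is_valley_def by simp
  then show False using assms(1) unfolding movable_def sorted_wrt_append
    by (metis list.set_intros(1) list.set_sel(1) not_less_iff_gr_or_eq Un_iff set_append
        sorted_wrt.simps(2) order_less_asym)
qed

lemma movable_valley_before_le:
  assumes "movable f c P X Q" "is_valley f (P @ c # X @ Q) b" "b \<le> length (P @ c # X @ Q)"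
  shows "b \<le> length P + length X + 1"
proof (rule ccontr)
  assume "\<not> b \<le> length P + length X + 1"
  then obtain d where b: "b = length P + length X + 1 + Suc d"
    by (metis add_Suc_right less_imp_Suc_add not_le)
  then obtain q Q' where Q: "take (Suc d) Q = q # Q'"
    using assms(3) by (cases "take (Suc d) Q") auto
  then have "q \<in> set Q" by (metis in_set_takeD list.set_intros(1))
  have "take b (P @ c # X @ Q) = P @ c # X @ q # Q'"
    unfolding b using Q by simp
  then have "sorted_wrt (\<lambda>x y. f y < f x) (P @ c # X @ q # Q')"
    using assms(2) unfolding is_valley_def by simp
  then have "f q < f c" unfolding sorted_wrt_append by simp
  then show False using assms(1) \<open>q \<in> set Q\<close> unfolding movable_def
    by (meson order_less_asym)
qed

lemma movable_valley_after_ge: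
  assumes "movable f c P X Q" "is_valley f (P @ X @ c # Q) a"
  shows "length P \<le> a"
proof (rule ccontr)
  assume "\<not> length P \<le> a"
  then obtain p P' where "drop a P = p # P'"
    by (cases "drop a P") auto
  moreover have "drop a (P @ X @ c # Q) = drop a P @ X @ c # Q"
    using \<open>\<not> length P \<le> a\<close> by simp
  ultimately have "sorted_wrt (\<lambda>x y. f x < f y) (p # P' @ X @ c # Q)"
    using assms(2) unfolding is_valley_def by simp
  moreover have "p \<in> set P" using \<open>drop a P = p # P'\<close> by (metis in_set_dropD list.set_intros(1))
  ultimately show False using assms(1) unfolding movable_def sorted_wrt_append
    by (metis list.set_sel(1) sorted_wrt.simps(2) Un_iff set_append order_less_asym
        order.strict_trans)
qed

lemma movable_valley_after_le:
  assumes "movable f c P X Q" "is_valley f (P @ X @ c # Q) a"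
  shows "a \<le> length P + length X"
proof (rule ccontr)
  assume "\<not> a \<le> length P + length X"
  then obtain d where "a = length P + length X + Suc d"
    by (metis add_Suc_right less_imp_Suc_add not_le)
  then have "take a (P @ X @ c # Q) = P @ X @ c # take d Q"
    by simp
  then have "sorted_wrt (\<lambda>x y. f y < f x) (P @ X @ c # take d Q)"
    using assms(2) unfolding is_valley_def by simp
  then have "\<forall>x\<in>set X. f c < f x" unfolding sorted_wrt_append by simp
  moreover obtain x where "x \<in> set X" using assms(1) unfolding movable_def by fastforce
  ultimately show False using assms(1) unfolding movable_def by (meson order_less_asym)
qed

lemma movable_valley_iff:
  assumes "movable f c P X Q" "length P \<le> a" "a \<le> length P + length X"
  shows "is_valley f (P @ c # X @ Q) (Suc a) \<longleftrightarrow> is_valley f (P @ X @ c # Q) a"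
proof -
  define i where "i = a - length P"
  have a: "a = length P + i" "i \<le> length X" using assms(2,3) unfolding i_def by auto
  have split: "take (Suc a) (P @ c # X @ Q) = P @ c # take i X"
    "drop (Suc a) (P @ c # X @ Q) = drop i X @ Q"
    "take a (P @ X @ c # Q) = P @ take i X" "drop a (P @ X @ c # Q) = drop i X @ c # Q"
    using a by simp_all
  have P: "\<forall>y\<in>set P. f c < f y" and Q: "\<forall>y\<in>set Q. f c < f y"
    and X: "\<forall>y\<in>set (take i X). f y < f c" "\<forall>y\<in>set (drop i X). f y < f c"
    using assms(1) unfolding movable_def by (auto dest: in_set_takeD in_set_dropD)
  have "sorted_wrt (\<lambda>x y. f y < f x) (P @ c # take i X) \<longleftrightarrow>
      sorted_wrt (\<lambda>x y. f y < f x) (P @ take i X)"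
    using P X(1) by (auto simp: sorted_wrt_append dest: order.strict_trans)
  moreover have "sorted_wrt (\<lambda>x y. f x < f y) (drop i X @ Q) \<longleftrightarrow>
      sorted_wrt (\<lambda>x y. f x < f y) (drop i X @ c # Q)"
    using Q X(2) by (auto simp: sorted_wrt_append dest: order.strict_trans)
  ultimately show ?thesis unfolding is_valley_def split by simp
qed

lemma movable_valleys:
  assumes "movable f c P X Q"
  defines "u \<equiv> P @ c # X @ Q" and "v \<equiv> P @ X @ c # Q"
  shows "{b. b \<le> length u \<and> is_valley f u b} = Suc ` {a. a \<le> length v \<and> is_valley f v a}"
proof (intro set_eqI iffI)
  note bounds = movable_valley_before_gt[OF assms(1)] movable_valley_before_le[OF assms(1)]
    movable_valley_after_ge[OF assms(1)] movable_valley_after_le[OF assms(1)]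
  have len: "length u = length v" "length v = length P + length X + 1 + length Q"
    unfolding u_def v_def by simp_all
  {
    fix b assume b: "b \<in> {b. b \<le> length u \<and> is_valley f u b}"
    then obtain a where "b = Suc a" using bounds(1) unfolding u_def by (cases b) auto
    moreover have "length P \<le> a" "a \<le> length P + length X"
      using b bounds(1,2) calculation unfolding u_def by force+
    ultimately show "b \<in> Suc ` {a. a \<le> length v \<and> is_valley f v a}"
      using b movable_valley_iff[OF assms(1)] len unfolding u_def v_def by auto
  next
    fix b assume "b \<in> Suc ` {a. a \<le> length v \<and> is_valley f v a}"
    then obtain a where a: "b = Suc a" "is_valley f v a" by auto
    then have "length P \<le> a" "a \<le> length P + length X"
      using bounds(3,4) unfolding v_def by auto
    then show "b \<in> {b. b \<le> length u \<and> is_valley f u b}"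
      using a movable_valley_iff[OF assms(1)] len unfolding u_def v_def by auto
  }
qed

lemma movable_valley_take:
  assumes "movable f c P X Q"
  shows "is_valley f (P @ c # X @ Q) b \<Longrightarrow> c \<in> set (take b (P @ c # X @ Q))"
    "is_valley f (P @ X @ c # Q) a \<Longrightarrow> c \<notin> set (take a (P @ X @ c # Q))"
proof -
  assume "is_valley f (P @ c # X @ Q) b"
  then have "length P < b" by (rule movable_valley_before_gt[OF assms])
  then have "take b (P @ c # X @ Q) = P @ c # take (b - length P - 1) (X @ Q)"
    by (simp add: take_append take_Cons')
  then show "c \<in> set (take b (P @ c # X @ Q))" by simp
next
  assume "is_valley f (P @ X @ c # Q) a"
  then have "a \<le> length P + length X" by (rule movable_valley_after_le[OF assms])
  then have "take a (P @ X @ c # Q) = take a (P @ X)" by simp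
  moreover have "c \<notin> set (P @ X)"
    using assms unfolding movable_def by auto
  ultimately show "c \<notin> set (take a (P @ X @ c # Q))" by (metis in_set_takeD)
qed

text \<open>The involution: in the block of letters not above \<open>c\<close> that follows the maximal prefix of
  letters above \<open>c\<close>, move \<open>c\<close> from one end to the other.\<close>

definition toggle_end :: "'a \<Rightarrow> 'a list \<Rightarrow> 'a list" where
  "toggle_end c Z = (if Z \<noteq> [] \<and> hd Z = c then tl Z @ [c] else c # butlast Z)"

definition move_letter :: "('a \<Rightarrow> 'b::linorder) \<Rightarrow> 'a \<Rightarrow> 'a list \<Rightarrow> 'a list" where
  "move_letter f c w =
     (let R = dropWhile (\<lambda>x. f c < f x) w
      in takeWhile (\<lambda>x. f c < f x) w @ toggle_end c (takeWhile (\<lambda>x. \<not> f c < f x) R)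
         @ dropWhile (\<lambda>x. \<not> f c < f x) R)"

lemma move_letter_forward:
  assumes "movable f c P X Q"
  shows "move_letter f c (P @ c # X @ Q) = P @ X @ c # Q"
proof -
  have P: "\<forall>y\<in>set P. f c < f y" and X: "\<forall>y\<in>set X. \<not> f c < f y" and Q: "\<forall>y\<in>set Q. f c < f y"
    using assms unfolding movable_def by auto
  have "takeWhile (\<lambda>x. \<not> f c < f x) Q = []" "dropWhile (\<lambda>x. \<not> f c < f x) Q = Q"
    using Q by (cases Q; simp)+
  then show ?thesis using P X
    by (simp add: move_letter_def toggle_end_def takeWhile_append2 dropWhile_append2)
qed

lemma move_letter_backward:
  assumes "movable f c P X Q"
  shows "move_letter f c (P @ X @ c # Q) = P @ c # X @ Q"
proof -
  obtain x X' where X: "X = x # X'" using assms unfolding movable_def by (cases X) auto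
  have P: "\<forall>y\<in>set P. f c < f y" and "\<forall>y\<in>set X. \<not> f c < f y" "f x < f c"
    and Q: "\<forall>y\<in>set Q. f c < f y"
    using assms X unfolding movable_def by auto
  moreover have "takeWhile (\<lambda>x. \<not> f c < f x) Q = []" "dropWhile (\<lambda>x. \<not> f c < f x) Q = Q"
    using Q by (cases Q; simp)+
  ultimately have "takeWhile (\<lambda>y. \<not> f c < f y) (X @ c # Q) = X @ [c]"
    "dropWhile (\<lambda>y. \<not> f c < f y) (X @ c # Q) = Q"
    by (simp_all add: takeWhile_append2 dropWhile_append2)
  moreover have "toggle_end c (X @ [c]) = c # X" unfolding toggle_end_def X using \<open>f x < f c\<close> by auto
  moreover have "takeWhile (\<lambda>y. f c < f y) (X @ c # Q) = []"
    "dropWhile (\<lambda>y. f c < f y) (X @ c # Q) = X @ c # Q"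
    unfolding X using \<open>f x < f c\<close> by auto
  ultimately show ?thesis using P
    by (simp add: move_letter_def Let_def takeWhile_append2 dropWhile_append2)
qed


lemma gap_letter_exists:
  assumes Sk: "set w \<subseteq> {0..k}" and am: "amiss k (set w) \<le> k" "amiss k (set w) \<notin> set w"
    and nk: "\<not> k_connected k w"
  shows "gap_letters k w \<noteq> {}"
proof -
  let ?S = "set w" and ?f = "irank k (set w)"
  obtain x z y where xyz: "x \<in> ?S" "z \<in> ?S" "y \<le> k" "y \<noteq> amiss k ?S" "?f x < ?f y" "?f y < ?f z"
    "y \<notin> ?S"
    using nk unfolding k_connected_def ilt_def by blast
  define T1 where "T1 = {s\<in>?S. ?f y < ?f s}"
  define T2 where "T2 = {s\<in>?S. ?f s < ?f y}"
  have T: "finite T1" "T1 \<noteq> {}" "finite T2" "T2 \<noteq> {}"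
    using xyz unfolding T1_def T2_def by auto
  have "Min (?f ` T1) \<in> ?f ` T1" "Max (?f ` T2) \<in> ?f ` T2" using T by simp_all
  then obtain c0 a0 where c0: "c0 \<in> T1" "?f c0 = Min (?f ` T1)"
    and a0: "a0 \<in> T2" "?f a0 = Max (?f ` T2)"
    by (metis imageE)
  have a0k: "a0 \<le> k" "a0 \<noteq> amiss k ?S" using a0 Sk am unfolding T2_def by auto
  have "isuc k a0 \<noteq> c0"
  proof
    assume "isuc k a0 = c0"
    then have "?f c0 = ?f a0 + 1" using irank_isuc[OF am(1) a0k] by simp
    then show False using a0 c0 unfolding T1_def T2_def by auto
  qed
  moreover have "\<not> (\<exists>b\<in>?S. ilt k ?S a0 b \<and> ilt k ?S b c0)"
  proof
    assume "\<exists>b\<in>?S. ilt k ?S a0 b \<and> ilt k ?S b c0"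
    then obtain b where b: "b \<in> ?S" "?f a0 < ?f b" "?f b < ?f c0" unfolding ilt_def by auto
    have "b \<noteq> y" using b xyz by auto
    then have "?f b \<noteq> ?f y" using irank_inj[OF am(1), of b y] b Sk xyz by auto
    then have "b \<in> T1 \<or> b \<in> T2" using b unfolding T1_def T2_def by auto
    then show False
      using b a0 c0 Min_le[of "?f ` T1" "?f b"] Max_ge[of "?f ` T2" "?f b"] T by auto
  qed
  moreover have "c0 \<in> ?S" "a0 \<in> ?S" "ilt k ?S a0 c0"
    using a0 c0 unfolding T1_def T2_def ilt_def by auto
  ultimately have "c0 \<in> gap_letters k w" unfolding gap_letters_def by blast
  then show ?thesis by blast
qed

definition umin :: "nat \<Rightarrow> nat list \<Rightarrow> nat" where
  "umin k w = (SOME c. is_umin k w c)"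

lemma umin_exists:
  assumes "set w \<subseteq> {0..k}" "amiss k (set w) \<le> k" "amiss k (set w) \<notin> set w" "\<not> k_connected k w"
  shows "is_umin k w (umin k w)"
proof -
  have "finite (gap_letters k w)" unfolding gap_letters_def by simp
  then obtain c where "is_arg_min (irank k (set w)) (\<lambda>c. c \<in> gap_letters k w) c"
    using ex_is_arg_min_if_finite gap_letter_exists[OF assms] by blast
  then have "is_umin k w c" unfolding is_umin_def is_arg_min_def ilt_def by auto
  then show ?thesis unfolding umin_def by (rule someI)
qed

lemma umin_unique:
  assumes "set w \<subseteq> {0..k}" "amiss k (set w) \<le> k" "is_umin k w c" "is_umin k w c'"
  shows "c = c'"
proof -
  have "c \<in> set w" "c' \<in> set w" using assms(3,4) unfolding is_umin_def gap_letters_def by auto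
  moreover have "irank k (set w) c = irank k (set w) c'"
    using assms(3,4) unfolding is_umin_def ilt_def by (meson linorder_neqE_nat)
  moreover have "c \<le> k" "c' \<le> k" using calculation(1,2) assms(1) by auto
  ultimately show ?thesis using irank_inj[OF assms(2)] by blast
qed

text \<open>The predecessor of \<open>u\<^sub>m\<^sub>i\<^sub>n\<close> in \<open>I\<^sub>S\<close> is not a letter of the word, since
  \<open>u\<^sub>m\<^sub>i\<^sub>n\<close> is the top of a gap; so all smaller letters commute with it.\<close>

lemma umin_commutes:
  assumes Sk: "set w \<subseteq> {0..k}" and am: "amiss k (set w) \<le> k" "amiss k (set w) \<notin> set w"
    and u: "is_umin k w c" and x: "x \<in> set w" "irank k (set w) x < irank k (set w) c"
  shows "isuc k x \<noteq> c" "isuc k c \<noteq> x"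
proof -
  let ?S = "set w" and ?f = "irank k (set w)"
  obtain a where a: "a \<in> ?S" "?f a < ?f c" "isuc k a \<noteq> c"
    "\<not> (\<exists>b\<in>?S. ?f a < ?f b \<and> ?f b < ?f c)"
    using u unfolding is_umin_def gap_letters_def ilt_def by auto
  have c: "c \<in> ?S" using u unfolding is_umin_def gap_letters_def by auto
  have xk: "x \<le> k" "x \<noteq> amiss k ?S" using x Sk am by auto
  show "isuc k x \<noteq> c"
  proof
    assume h: "isuc k x = c"
    then have fc: "?f c = ?f x + 1" using irank_isuc[OF am(1) xk] by simp
    then have "?f a = ?f x" using a x by (metis Suc_eq_plus1 less_SucE linorder_neqE_nat)
    then have "a = x" using irank_inj[OF am(1), of a x] a Sk xk by auto
    then show False using a h by simp
  qed
  have "c \<le> k" "c \<noteq> amiss k ?S" using c Sk am by auto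
  then show "isuc k c \<noteq> x" using irank_isuc[OF am(1)] x by fastforce
qed


section \<open>The sign-reversing involution\<close>

definition nwc_word :: "nat \<Rightarrow> nat list \<Rightarrow> bool" where
  "nwc_word k w \<longleftrightarrow> set w \<subseteq> {0..k} \<and> length w \<le> k \<and> valleys k w \<noteq> {} \<and> \<not> weak_connected k w"

definition umin_left :: "nat \<Rightarrow> nat list \<Rightarrow> bool" where
  "umin_left k w \<longleftrightarrow> (\<exists>a\<in>valleys k w. umin k w \<in> set (take a w))"

definition umin_swap :: "nat \<Rightarrow> nat list \<Rightarrow> nat list" where
  "umin_swap k w = move_letter (irank k (set w)) (umin k w) w"

lemma nwc_word_umin:
  assumes "nwc_word k w"
  shows "amiss k (set w) \<le> k" "amiss k (set w) \<notin> set w" "is_umin k w (umin k w)"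
    "count_list w (umin k w) = 1"
proof -
  have w: "set w \<subseteq> {0..k}" "length w \<le> k" "valleys k w \<noteq> {}" "\<not> weak_connected k w"
    using assms unfolding nwc_word_def by auto
  show am: "amiss k (set w) \<le> k" "amiss k (set w) \<notin> set w"
    using amiss_le_notin[OF w(1) set_proper_if_length_le[OF w(2)]] by auto
  show u: "is_umin k w (umin k w)"
    using umin_exists[OF w(1) am] w(4) unfolding weak_connected_def by simp
  let ?c = "umin k w"
  have not2: "count_list w ?c \<noteq> 2" and "?c \<in> set w"
    using u w(4) unfolding weak_connected_def is_umin_def gap_letters_def by auto
  then have not0: "count_list w ?c \<noteq> 0" by (simp add: count_list_0_iff)
  obtain a where "is_valley (irank k (set w)) w a" using w(3) unfolding valleys_def by auto
  then have "distinct (take a w)" "distinct (drop a w)"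
    unfolding is_valley_def by (auto intro: sorted_wrt_irrefl_imp_distinct)
  moreover have "count_list xs x \<le> 1" if "distinct xs" for xs :: "nat list" and x
    using that by (induction xs) auto
  ultimately have "count_list (take a w) ?c \<le> 1" "count_list (drop a w) ?c \<le> 1"
    by blast+
  moreover have "count_list w ?c = count_list (take a w) ?c + count_list (drop a w) ?c"
    by (metis append_take_drop_id count_list_append)
  ultimately show "count_list w ?c = 1" using not0 not2 by linarith
qed

lemma movable_if_in_decreasing:
  fixes f :: "'a \<Rightarrow> 'b::linorder"
  assumes P0: "sorted_wrt (\<lambda>x y. f y < f x) P0" and Q0: "sorted_wrt (\<lambda>x y. f x < f y) Q0"
    and c: "c \<in> set P0" "\<forall>y\<in>set Q0. f y \<noteq> f c" and below: "\<exists>x\<in>set (P0 @ Q0). f x < f c"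
  shows "\<exists>P X Q. movable f c P X Q \<and> P0 @ Q0 = P @ c # X @ Q"
proof -
  obtain P P2 where P: "P0 = P @ c # P2" using split_list[OF c(1)] by blast
  define Q1 where "Q1 = filter (\<lambda>y. f y < f c) Q0"
  define Q where "Q = filter (\<lambda>y. f c < f y) Q0"
  have PP: "\<forall>y\<in>set P. f c < f y" "\<forall>y\<in>set P2. f y < f c"
    using P0 unfolding P sorted_wrt_append by auto
  have QQ: "Q0 = Q1 @ Q"
    unfolding Q1_def Q_def using sorted_wrt_split_at_inc[OF Q0 c(2)] .
  have "P2 @ Q1 \<noteq> []"
    using below PP unfolding P Q1_def by (auto simp: filter_empty_conv)
  then have "movable f c P (P2 @ Q1) Q"
    using PP unfolding movable_def Q1_def Q_def by auto
  moreover have "P0 @ Q0 = P @ c # (P2 @ Q1) @ Q" using P QQ by simp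
  ultimately show ?thesis by blast
qed

lemma movable_if_in_increasing:
  fixes f :: "'a \<Rightarrow> 'b::linorder"
  assumes P0: "sorted_wrt (\<lambda>x y. f y < f x) P0" and Q0: "sorted_wrt (\<lambda>x y. f x < f y) Q0"
    and c: "c \<in> set Q0" "\<forall>y\<in>set P0. f y \<noteq> f c" and below: "\<exists>x\<in>set (P0 @ Q0). f x < f c"
  shows "\<exists>P X Q. movable f c P X Q \<and> P0 @ Q0 = P @ X @ c # Q"
proof -
  obtain Q1 Q where Q: "Q0 = Q1 @ c # Q" using split_list[OF c(1)] by blast
  define P where "P = filter (\<lambda>y. f c < f y) P0"
  define P2 where "P2 = filter (\<lambda>y. f y < f c) P0"
  have QQ: "\<forall>y\<in>set Q1. f y < f c" "\<forall>y\<in>set Q. f c < f y"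
    using Q0 unfolding Q sorted_wrt_append by auto
  have PP: "P0 = P @ P2"
    unfolding P_def P2_def using sorted_wrt_split_at_dec[OF P0 c(2)] .
  have "P2 @ Q1 \<noteq> []"
    using below QQ unfolding Q P2_def by (auto simp: filter_empty_conv)
  then have "movable f c P (P2 @ Q1) Q"
    using QQ unfolding movable_def P_def P2_def by auto
  moreover have "P0 @ Q0 = P @ (P2 @ Q1) @ c # Q" using PP Q by simp
  ultimately show ?thesis by blast
qed

lemma valley_split_movable:
  fixes f :: "'a \<Rightarrow> 'b::linorder"
  assumes P0: "sorted_wrt (\<lambda>x y. f y < f x) P0" and Q0: "sorted_wrt (\<lambda>x y. f x < f y) Q0"
    and c: "count_list (P0 @ Q0) c = 1" and inj: "inj_on f (set (P0 @ Q0))"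
    and below: "\<exists>x\<in>set (P0 @ Q0). f x < f c"
  shows "\<exists>P X Q. movable f c P X Q \<and> (P0 @ Q0 = P @ c # X @ Q \<or> P0 @ Q0 = P @ X @ c # Q)"
proof -
  have c_in: "c \<in> set (P0 @ Q0)" using c by (metis count_notin zero_neq_one)
  have "c \<notin> set P0 \<or> c \<notin> set Q0" using c by (auto simp: count_list_0_iff[symmetric])
  moreover have "f y \<noteq> f c" if "y \<in> set (P0 @ Q0)" "y \<noteq> c" for y
    using inj that c_in unfolding inj_on_def by blast
  ultimately show ?thesis
    using c_in movable_if_in_decreasing[OF P0 Q0 _ _ below] movable_if_in_increasing[OF P0 Q0 _ _ below]
    by fastforce
qed

lemma nwc_word_movable:
  assumes "nwc_word k w"
  obtains P X Q where "movable (irank k (set w)) (umin k w) P X Q"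
    "w = P @ umin k w # X @ Q \<or> w = P @ X @ umin k w # Q"
proof -
  let ?f = "irank k (set w)" and ?c = "umin k w"
  note u = nwc_word_umin[OF assms]
  have Sk: "set w \<subseteq> {0..k}" using assms unfolding nwc_word_def by simp
  obtain a where "is_valley ?f w a" using assms unfolding nwc_word_def valleys_def by auto
  then have "sorted_wrt (\<lambda>x y. ?f y < ?f x) (take a w)" "sorted_wrt (\<lambda>x y. ?f x < ?f y) (drop a w)"
    unfolding is_valley_def by auto
  moreover have "\<exists>x\<in>set w. ?f x < ?f ?c"
    using u(3) unfolding is_umin_def gap_letters_def ilt_def by auto
  ultimately show ?thesis
    using valley_split_movable[of ?f "take a w" "drop a w" ?c] that u(4) irank_inj_on[OF u(1) Sk]
    by auto
qed

lemma umin_cong: "set u = set v \<Longrightarrow> umin k u = umin k v"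
  unfolding umin_def is_umin_def gap_letters_def by simp

lemma weak_connected_cong:
  assumes "set u = set v" "\<And>x. count_list u x = count_list v x"
  shows "weak_connected k u = weak_connected k v"
  using assms unfolding weak_connected_def k_connected_def is_umin_def gap_letters_def by simp

lemma nwc_word_umin_commutes:
  assumes w: "nwc_word k w"
    and X: "set X \<subseteq> set w" "\<forall>y\<in>set X. irank k (set w) y < irank k (set w) (umin k w)"
  shows "word_equiv k (umin k w # X) (X @ [umin k w])"
proof (rule word_equiv_commute)
  note u = nwc_word_umin[OF w]
  have Sk: "set w \<subseteq> {0..k}" using w unfolding nwc_word_def by simp
  show "umin k w \<le> k" using u(3) Sk unfolding is_umin_def gap_letters_def by auto
  fix y assume "y \<in> set X"
  then show "y \<le> k \<and> isuc k (umin k w) \<noteq> y \<and> isuc k y \<noteq> umin k w"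
    using umin_commutes[OF Sk u(1-3)] X Sk by auto
qed

lemma umin_pair:
  assumes w: "nwc_word k w" "movable (irank k (set w)) c P X Q" "w = P @ c # X @ Q \<or> w = P @ X @ c # Q"
    and c: "c = umin k w"
  defines "u \<equiv> P @ c # X @ Q" and "v \<equiv> P @ X @ c # Q"
  shows "umin_swap k u = v" "umin_swap k v = u" "word_equiv k u v"
    "valleys k u = Suc ` valleys k v" "umin_left k u" "\<not> umin_left k v"
    "nwc_word k u" "nwc_word k v"
proof -
  let ?f = "irank k (set w)"
  have set: "set u = set w" "set v = set w" using w(3) unfolding u_def v_def by auto
  have umin: "umin k u = c" "umin k v = c" using umin_cong set c by metis+
  have "umin_swap k u = move_letter ?f c u" "umin_swap k v = move_letter ?f c v"
    unfolding umin_swap_def set umin by simp_all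
  then show "umin_swap k u = v" "umin_swap k v = u"
    using move_letter_forward[OF w(2)] move_letter_backward[OF w(2)] unfolding u_def v_def
    by simp_all
  have "set X \<subseteq> set w" "\<forall>y\<in>set X. ?f y < ?f c"
    using w(2,3) unfolding movable_def by auto
  then have "word_equiv k (c # X) (X @ [c])"
    unfolding c by (rule nwc_word_umin_commutes[OF w(1)])
  moreover have "set P \<subseteq> {0..k}" "set Q \<subseteq> {0..k}" using w(1,3) unfolding nwc_word_def by auto
  ultimately show "word_equiv k u v" unfolding u_def v_def
    using word_equiv_context[of k "c # X" "X @ [c]" P Q] by simp
  note mv = movable_valleys[OF w(2), folded u_def v_def]
    movable_valley_take[OF w(2), folded u_def v_def]
  have vu: "valleys k u = {b. b \<le> length u \<and> is_valley ?f u b}"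
    and vv: "valleys k v = {a. a \<le> length v \<and> is_valley ?f v a}"
    unfolding valleys_def set by simp_all
  show valleys: "valleys k u = Suc ` valleys k v"
    unfolding vu vv by (rule mv(1))
  have "valleys k u \<noteq> {}" using w(1,3) valleys unfolding nwc_word_def u_def v_def by auto
  then show "umin_left k u" using mv(2) unfolding umin_left_def vu umin by auto
  show "\<not> umin_left k v" using mv(3) unfolding umin_left_def vv umin by auto
  have "length u = length w" "length v = length w" "\<And>x. count_list u x = count_list w x"
    "\<And>x. count_list v x = count_list w x"
    using w(3) unfolding u_def v_def by auto
  moreover have "valleys k v \<noteq> {}" using \<open>valleys k u \<noteq> {}\<close> valleys by auto
  moreover have "weak_connected k u = weak_connected k w" "weak_connected k v = weak_connected k w"
    using weak_connected_cong set calculation(3,4) by blast+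
  ultimately show "nwc_word k u" "nwc_word k v"
    using w(1) set \<open>valleys k u \<noteq> {}\<close> unfolding nwc_word_def by simp_all
qed

lemma umin_swap:
  assumes "nwc_word k w"
  shows "nwc_word k (umin_swap k w)" "umin_swap k (umin_swap k w) = w" "umin_swap k w \<noteq> w"
    "word_equiv k w (umin_swap k w)" "length (umin_swap k w) = length w"
    "set (umin_swap k w) = set w" "umin_left k (umin_swap k w) \<longleftrightarrow> \<not> umin_left k w"
    "umin_left k w \<Longrightarrow> valleys k w = Suc ` valleys k (umin_swap k w)"
proof -
  obtain P X Q where m: "movable (irank k (set w)) (umin k w) P X Q"
    "w = P @ umin k w # X @ Q \<or> w = P @ X @ umin k w # Q"
    using nwc_word_movable[OF assms] by blast
  define c where "c = umin k w"
  note pair = umin_pair[OF assms m[folded c_def] c_def]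
  have "P @ c # X @ Q \<noteq> P @ X @ c # Q" using pair(5,6) by metis
  with m(2)[folded c_def] show "umin_swap k w \<noteq> w" using pair(1,2) by auto
  from m(2)[folded c_def] show "nwc_word k (umin_swap k w)" "umin_swap k (umin_swap k w) = w"
    "word_equiv k w (umin_swap k w)" "length (umin_swap k w) = length w"
    "set (umin_swap k w) = set w" "umin_left k (umin_swap k w) \<longleftrightarrow> \<not> umin_left k w"
    "umin_left k w \<Longrightarrow> valleys k w = Suc ` valleys k (umin_swap k w)"
    using pair by (auto intro: equivclp_sym)
qed

lemma rel_ideal_if_sign_reversing_involution:
  fixes F :: falg
  assumes "finite {w. F w \<noteq> 0}"
    and "\<And>w. F w \<noteq> 0 \<Longrightarrow> \<sigma> w \<noteq> w \<and> \<sigma> (\<sigma> w) = w \<and> F (\<sigma> w) = - F w \<and> wd w - wd (\<sigma> w) \<in> rel_ideal k"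
  shows "F \<in> rel_ideal k"
  using assms
proof (induction "card {w. F w \<noteq> 0}" arbitrary: F rule: less_induct)
  case less
  show ?case
  proof (cases "\<exists>w. F w \<noteq> 0")
    case False
    then have "F = 0" by (auto simp: fun_eq_iff)
    then show ?thesis using rel_ideal.zero by simp
  next
    case True
    then obtain w0 where w0: "F w0 \<noteq> 0" by auto
    note h0 = less.prems(2)[OF w0]
    define G where "G = F - smul (F w0) (wd w0 - wd (\<sigma> w0))"
    have G: "G v = (if v = w0 \<or> v = \<sigma> w0 then 0 else F v)" for v
      using h0 unfolding G_def smul_def wd_def by auto
    have supp: "{w. G w \<noteq> 0} = {w. F w \<noteq> 0} - {w0, \<sigma> w0}"
      using G by auto
    have "{w. F w \<noteq> 0} - {w0, \<sigma> w0} \<subset> {w. F w \<noteq> 0}" using w0 by auto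
    then have "card {w. G w \<noteq> 0} < card {w. F w \<noteq> 0}"
      unfolding supp by (intro psubset_card_mono less.prems(1))
    moreover have "G w \<noteq> 0 \<Longrightarrow> \<sigma> w \<noteq> w \<and> \<sigma> (\<sigma> w) = w \<and> G (\<sigma> w) = - G w \<and>
        wd w - wd (\<sigma> w) \<in> rel_ideal k" for w
      using less.prems(2)[of w] G h0 by (metis neg_equal_0_iff_equal)
    ultimately have "G \<in> rel_ideal k" using less.hyps less.prems(1) supp by simp
    then have "G + smul (F w0) (wd w0 - wd (\<sigma> w0)) \<in> rel_ideal k"
      using rel_ideal.add rel_ideal_smul h0 by blast
    then show ?thesis unfolding G_def by simp
  qed
qed


definition hook_words_sum :: "nat \<Rightarrow> nat \<Rightarrow> falg" where
  "hook_words_sum k r =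
     (\<Sum>i<r. smul ((-1) ^ i) (usum (V_wc k r i)))
   + (\<Sum>i\<in>{1..r-1}. smul ((-1) ^ i * int (r - i)) (usum (U_wc k r (i - 1))))
   + (\<Sum>i\<in>{1..r-2}. smul ((-1) ^ i) (usum (U_nwc_left k r (i - 1))))"

definition valley_sign_sum :: "nat \<Rightarrow> nat \<Rightarrow> nat list \<Rightarrow> int" where
  "valley_sign_sum k r w = (\<Sum>a\<in>valleys k w. (-1) ^ (r - a))"

lemma hook_sets_subset_words:
  "V_wc k r i \<subseteq> words k r" "U_wc k r i \<subseteq> words k r" "U_nwc_left k r i \<subseteq> words k r"
  unfolding V_wc_def U_wc_def U_nwc_left_def is_word_def words_def by auto

lemma hook_words_sum_apply: "hook_words_sum k r w =
    (\<Sum>i<r. if w \<in> V_wc k r i then (-1) ^ i else 0)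
  + (\<Sum>i\<in>{1..r-1}. if w \<in> U_wc k r (i - 1) then (-1) ^ i * int (r - i) else 0)
  + (\<Sum>i\<in>{1..r-2}. if w \<in> U_nwc_left k r (i - 1) then (-1) ^ i else 0)"
proof -
  have "c * (if P then 1 else 0) = (if P then c else 0)" for c :: int and P by simp
  then show ?thesis
    using finite_subset[OF hook_sets_subset_words(1) finite_words]
      finite_subset[OF hook_sets_subset_words(2) finite_words]
      finite_subset[OF hook_sets_subset_words(3) finite_words]
    unfolding hook_words_sum_def by (simp add: sum_fun_apply smul_def usum_apply)
qed

lemma hook_words_sum_outside:
  assumes "w \<notin> words k r"
  shows "hook_words_sum k r w = 0"
proof -
  have "w \<notin> V_wc k r i" "w \<notin> U_wc k r i" "w \<notin> U_nwc_left k r i" for i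
    using assms hook_sets_subset_words by blast+
  then show ?thesis unfolding hook_words_sum_apply by simp
qed

lemma words_amiss_le:
  assumes "w \<in> words k r" "r \<le> k"
  shows "amiss k (set w) \<le> k" "is_word k w"
  using assms amiss_le_notin set_proper_if_length_le[of w k]
  unfolding words_def is_word_def by auto

lemma mem_hook_sets:
  assumes "w \<in> words k r" "r \<le> k"
  shows "w \<in> V_wc k r i \<longleftrightarrow> (\<exists>j. hookV_at k w j) \<and> asc k w = i \<and> weak_connected k w"
    "w \<in> U_wc k r i \<longleftrightarrow> (\<exists>j. hookU_at k w j) \<and> asc k w = i \<and> weak_connected k w"
    "w \<in> U_nwc_left k r i \<longleftrightarrow> asc k w = i \<and> \<not> weak_connected k w \<and>
        (\<exists>j c p. hookU_at k w j \<and> is_umin k w c \<and> p < j \<and> w ! p = c)"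
  using assms words_amiss_le(2)[OF assms] unfolding V_wc_def U_wc_def U_nwc_left_def words_def
  by auto

lemma coefficients_hookV:
  assumes w: "w \<in> words k r" "r \<le> k" and j: "hookV_at k w j"
  shows "valley_weight k r w = (-1) ^ (r - j)" "valley_sign_sum k r w = 0"
    "hook_words_sum k r w = (if weak_connected k w then (-1) ^ (r - j) else 0)"
proof -
  have r: "length w = r" "set w \<subseteq> {0..k}" using w(1) unfolding words_def by auto
  have "1 \<le> j" "j \<le> r" using j r unfolding hookV_at_def by auto
  then have "r - (j - 1) = Suc (r - j)" by simp
  then have sign: "(-1::int) ^ (r - (j - 1)) = - ((-1) ^ (r - j))" by simp
  note V = valleys_hookV[OF j]
  show "valley_weight k r w = (-1) ^ (r - j)"
    unfolding valley_weight_def V(1) using w(1) sign \<open>1 \<le> j\<close>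
    by (simp add: of_nat_diff algebra_simps)
  show "valley_sign_sum k r w = 0"
    unfolding valley_sign_sum_def V(1) using sign \<open>1 \<le> j\<close> by simp
  have nU': "\<not> hookU_at k w j'" for j'
    using not_hookV_and_hookU[OF words_amiss_le(1)[OF w] r(2) j] by blast
  then have nU: "(\<exists>j. hookU_at k w j) \<longleftrightarrow> False" by blast
  have V': "(\<exists>j. hookV_at k w j) \<longleftrightarrow> True" using j by blast
  have "r - j < r" using \<open>1 \<le> j\<close> \<open>j \<le> r\<close> by simp
  then show "hook_words_sum k r w = (if weak_connected k w then (-1) ^ (r - j) else 0)"
    unfolding hook_words_sum_apply mem_hook_sets[OF w] V(2) r(1) nU V'
    by (cases "weak_connected k w") (simp_all add: eq_commute[of "r - j"] nU')
qed

lemma umin_left_hookU: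
  assumes w: "nwc_word k w" and j: "hookU_at k w j"
  shows "(\<exists>j c p. hookU_at k w j \<and> is_umin k w c \<and> p < j \<and> w ! p = c) \<longleftrightarrow> umin_left k w"
    "umin_left k w \<Longrightarrow> 2 \<le> j"
proof -
  note u = nwc_word_umin[OF w]
  have Sk: "set w \<subseteq> {0..k}" using w unfolding nwc_word_def by simp
  have V: "valleys k w = {j'}" if "hookU_at k w j'" for j'
    using valleys_hookU(1)[OF u(1) Sk that] .
  have left: "umin_left k w \<longleftrightarrow> (\<exists>p<j. w ! p = umin k w)"
    unfolding umin_left_def V[OF j] using j unfolding hookU_at_def
    by (auto simp: in_set_conv_nth)
  show "(\<exists>j c p. hookU_at k w j \<and> is_umin k w c \<and> p < j \<and> w ! p = c) \<longleftrightarrow> umin_left k w"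
  proof
    assume "\<exists>j c p. hookU_at k w j \<and> is_umin k w c \<and> p < j \<and> w ! p = c"
    then obtain j' c p where h: "hookU_at k w j'" "is_umin k w c" "p < j'" "w ! p = c" by blast
    have "j' = j" using V[OF h(1)] V[OF j] by simp
    moreover have "c = umin k w" using umin_unique[OF Sk u(1) h(2) u(3)] .
    ultimately show "umin_left k w" unfolding left using h(3,4) by blast
  next
    assume "umin_left k w"
    then show "\<exists>j c p. hookU_at k w j \<and> is_umin k w c \<and> p < j \<and> w ! p = c"
      unfolding left using j u(3) by blast
  qed
  show "2 \<le> j" if "umin_left k w"
  proof (rule ccontr)
    assume "\<not> 2 \<le> j"
    then have "j = 1" using j unfolding hookU_at_def by simp
    then have c: "w ! 0 = umin k w" "w ! 1 = umin k w" and len: "1 < length w"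
      using that j unfolding left hookU_at_def by auto
    have "take 2 w = [w ! 0, w ! 1]"
      using len by (cases w; cases "tl w") (auto simp: numeral_2_eq_2)
    then have "count_list (take 2 w) (umin k w) = 2" using c by simp
    then have "count_list w (umin k w) \<ge> 2"
      by (metis append_take_drop_id count_list_append le_add1)
    then show False using u(4) by simp
  qed
qed

lemma coefficients_hookU:
  assumes w: "w \<in> words k r" "r \<le> k" and j: "hookU_at k w j"
  shows "valley_weight k r w = (-1) ^ (r - j) * int j" "valley_sign_sum k r w = (-1) ^ (r - j)"
proof -
  have "set w \<subseteq> {0..k}" using w(1) unfolding words_def by auto
  note U = valleys_hookU[OF words_amiss_le(1)[OF w] this j]
  show "valley_weight k r w = (-1) ^ (r - j) * int j"
    unfolding valley_weight_def U(1) using w(1) by simp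
  show "valley_sign_sum k r w = (-1) ^ (r - j)"
    unfolding valley_sign_sum_def U(1) by simp
qed

lemma sum_asc_hookU:
  assumes w: "w \<in> words k r" "r \<le> k" and j: "hookU_at k w j" and I: "finite I" "I \<subseteq> {1..}"
  shows "(\<Sum>i\<in>I. if asc k w = i - 1 then c i else 0) = (if r - j \<in> I then c (r - j) else 0)"
proof -
  have r: "length w = r" "set w \<subseteq> {0..k}" using w(1) unfolding words_def by auto
  have "asc k w = r - j - 1" "j < r"
    using valleys_hookU(2)[OF words_amiss_le(1)[OF w] r(2) j] j r(1) unfolding hookU_at_def by auto
  then have "(\<Sum>i\<in>I. if asc k w = i - 1 then c i else 0) = (\<Sum>i\<in>I. if i = r - j then c i else 0)"
    using I(2) by (intro sum.cong refl) auto
  then show ?thesis using I(1) by simp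
qed

lemma hook_words_sum_hookU:
  assumes w: "w \<in> words k r" "r \<le> k" and j: "hookU_at k w j"
  shows "weak_connected k w \<Longrightarrow> hook_words_sum k r w = (-1) ^ (r - j) * int j"
    "nwc_word k w \<Longrightarrow> hook_words_sum k r w = (if umin_left k w then (-1) ^ (r - j) else 0)"
proof -
  have r: "length w = r" "set w \<subseteq> {0..k}" using w(1) unfolding words_def by auto
  have jr: "1 \<le> j" "j < r" using j r unfolding hookU_at_def by auto
  have nV': "\<not> hookV_at k w j'" for j'
    using not_hookV_and_hookU[OF words_amiss_le(1)[OF w] r(2) _ j] by blast
  then have nV: "(\<exists>j. hookV_at k w j) \<longleftrightarrow> False" by blast
  have U': "(\<exists>j. hookU_at k w j) \<longleftrightarrow> True" using j by blast
  note asc_sum = sum_asc_hookU[OF w j]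
  show "hook_words_sum k r w = (-1) ^ (r - j) * int j" if "weak_connected k w"
  proof -
    have "1 \<le> r - j" "r - j \<le> r - 1" "r - (r - j) = j" using jr by auto
    then show ?thesis
      unfolding hook_words_sum_apply mem_hook_sets[OF w] nV U'
      using that asc_sum[of "{1..r-1}" "\<lambda>i. (-1) ^ i * int (r - i)"] by (simp add: nV')
  qed
  show "hook_words_sum k r w = (if umin_left k w then (-1) ^ (r - j) else 0)" if "nwc_word k w"
  proof -
    have "\<not> weak_connected k w" using that unfolding nwc_word_def by simp
    moreover have "umin_left k w \<Longrightarrow> r - j \<in> {1..r-2}" using umin_left_hookU(2)[OF that j] jr by auto
    ultimately show ?thesis
      unfolding hook_words_sum_apply mem_hook_sets[OF w] nV umin_left_hookU(1)[OF that j]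
      using asc_sum[of "{1..r-2}" "\<lambda>i. (-1) ^ i"] by (cases "umin_left k w") (simp_all add: nV')
  qed
qed

lemma valley_weight_eq_hook_words_sum:
  assumes "1 \<le> r" "r \<le> k" "\<not> nwc_word k w"
  shows "valley_weight k r w = hook_words_sum k r w"
proof (cases "w \<in> words k r")
  case False
  then show ?thesis using hook_words_sum_outside unfolding valley_weight_def by simp
next
  case w: True
  have r: "length w = r" "set w \<subseteq> {0..k}" using w unfolding words_def by auto
  then have "valleys k w = {} \<or> weak_connected k w"
    using assms unfolding nwc_word_def by auto
  moreover note am = words_amiss_le(1)[OF w assms(2)]
  consider (V) j where "hookV_at k w j" | (U) j where "hookU_at k w j"
    | (none) "\<not> (\<exists>j. hookV_at k w j)" "\<not> (\<exists>j. hookU_at k w j)"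
    by blast
  then show ?thesis
  proof cases
    case V
    then show ?thesis using calculation coefficients_hookV[OF w assms(2) V] valleys_hookV[OF V] by auto
  next
    case U
    then show ?thesis
      using calculation coefficients_hookU[OF w assms(2) U] hook_words_sum_hookU[OF w assms(2) U]
        valleys_hookU[OF am r(2) U] by auto
  next
    case none
    have "w \<noteq> []" using r assms(1) by auto
    then have "valleys k w = {}" using hook_if_valley[OF am r(2)] none by blast
    moreover have "w \<notin> V_wc k r i" "w \<notin> U_wc k r i" "w \<notin> U_nwc_left k r i" for i
      using none mem_hook_sets[OF w assms(2)] by auto
    ultimately show ?thesis unfolding valley_weight_def hook_words_sum_apply by simp
  qed
qed

lemma hook_words_sum_nwc:
  assumes "w \<in> words k r" "1 \<le> r" "r \<le> k" "nwc_word k w"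
  shows "hook_words_sum k r w = (if umin_left k w then valley_sign_sum k r w else 0)"
proof -
  have r: "set w \<subseteq> {0..k}" "w \<noteq> []" "valleys k w \<noteq> {}"
    using assms unfolding words_def nwc_word_def by auto
  have "\<not> weak_connected k w" using assms(4) unfolding nwc_word_def by simp
  from hook_if_valley[OF words_amiss_le(1)[OF assms(1,3)] r] show ?thesis
    using coefficients_hookV[OF assms(1,3)] coefficients_hookU[OF assms(1,3)]
      hook_words_sum_hookU[OF assms(1,3)] assms(4)
      \<open>\<not> weak_connected k w\<close> by auto
qed

text \<open>On a left word the swap lowers every valley by one, so the weights \<open>(-1)\<^sup>r\<^sup>-\<^sup>a a\<close> of
  the pair telescope to the sign sum.\<close>

lemma valley_weight_swap:
  assumes w: "w \<in> words k r" "nwc_word k w" "umin_left k w"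
  shows "valley_weight k r w + valley_weight k r (umin_swap k w) = valley_sign_sum k r w"
proof -
  note S = umin_swap[OF w(2)]
  let ?V = "valleys k (umin_swap k w)"
  have w': "umin_swap k w \<in> words k r" using w(1) S(5,6) unfolding words_def by simp
  have V: "valleys k w = Suc ` ?V" using S(8) w(3) .
  have "Suc a \<le> r" if "a \<in> ?V" for a
  proof -
    have "Suc a \<in> valleys k w" using that V by simp
    then show ?thesis using w(1) unfolding valleys_def words_def by simp
  qed
  then have "(\<Sum>a\<in>?V. (-1) ^ (r - Suc a) * int (Suc a) + (-1) ^ (r - a) * int a)
      = (\<Sum>a\<in>?V. (-1::int) ^ (r - Suc a))"
  proof (intro sum.cong refl)
    fix a assume "a \<in> ?V"
    then have "r - a = Suc (r - Suc a)" using \<open>a \<in> ?V \<Longrightarrow> Suc a \<le> r\<close> by simp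
    then show "(-1) ^ (r - Suc a) * int (Suc a) + (-1) ^ (r - a) * int a = (-1::int) ^ (r - Suc a)"
      by (simp add: algebra_simps)
  qed
  then show ?thesis
    unfolding valley_weight_def valley_sign_sum_def using w(1) w' V
    by (simp add: sum.reindex sum.distrib)
qed

lemma valley_weight_equiv_hook_words_sum:
  assumes "1 \<le> r" "r \<le> k"
  shows "valley_weight k r - hook_words_sum k r \<in> rel_ideal k"
proof (rule rel_ideal_if_sign_reversing_involution[where \<sigma> = "umin_swap k"])
  let ?F = "valley_weight k r - hook_words_sum k r"
  have supp: "w \<in> words k r \<and> nwc_word k w" if "?F w \<noteq> 0" for w
    using that valley_weight_eq_hook_words_sum[OF assms, of w] hook_words_sum_outside[of w k r]
    unfolding valley_weight_def by (auto split: if_splits)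
  show "finite {w. ?F w \<noteq> 0}"
    using supp by (intro finite_subset[OF _ finite_words]) auto
  fix w assume "?F w \<noteq> 0"
  then have w: "w \<in> words k r" "nwc_word k w" using supp by auto
  note S = umin_swap[OF w(2)]
  have w': "umin_swap k w \<in> words k r" using w(1) S(5,6) unfolding words_def by simp
  have "?F (umin_swap k w) = - ?F w"
  proof (cases "umin_left k w")
    case True
    then show ?thesis using valley_weight_swap[OF w True] hook_words_sum_nwc[OF w(1) assms w(2)]
      hook_words_sum_nwc[OF w' assms S(1)] S(7) by simp
  next
    case False
    then have "umin_left k (umin_swap k w)" using S(7) by simp
    then show ?thesis using valley_weight_swap[OF w' S(1)] hook_words_sum_nwc[OF w(1) assms w(2)]
      hook_words_sum_nwc[OF w' assms S(1)] S(2) False by simp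
  qed
  then show "umin_swap k w \<noteq> w \<and> umin_swap k (umin_swap k w) = w \<and> ?F (umin_swap k w) = - ?F w \<and>
      wd w - wd (umin_swap k w) \<in> rel_ideal k"
    using S word_equiv_imp_rel_ideal by blast
qed

theorem lemma7p6:
  fixes k r :: nat
  assumes "1 \<le> r" and "r \<le> k"
  shows "aeq k (p_el k r)
     ((\<Sum>i<r. smul ((-1) ^ i) (usum (V_wc k r i)))
      + (\<Sum>i\<in>{1..r-1}. smul ((-1) ^ i * int (r - i)) (usum (U_wc k r (i - 1))))
      + (\<Sum>i\<in>{1..r-2}. smul ((-1) ^ i) (usum (U_nwc_left k r (i - 1)))))"
proof -
  have "p_el k r - hook_words_sum k r
      = (p_el k r - valley_weight k r) + (valley_weight k r - hook_words_sum k r)"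
    by simp
  also have "\<dots> \<in> rel_ideal k"
    using rel_ideal.add p_el_equiv_valley_weight[OF assms] valley_weight_equiv_hook_words_sum[OF assms]
    by blast
  finally show ?thesis unfolding aeq_def hook_words_sum_def .
qed

end
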